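(* Consider the sparse linear Gaussian model: $S\in\{1,\dots,N\}$, $\mathcal{X}_S=\{\mathbf{x}\in\mathbb{R}^N:\|\mathbf{x}\|_0\le S\}$, $\mathbf{H}\in\mathbb{R}^{M\times N}$ with $\operatorname{spark}(\mathbf{H})>S$, $\sigma>0$, observation $\mathbf{y}=\mathbf{H}\mathbf{x}+\mathbf{n}$, $\mathbf{n}\sim\mathcal{N}(\mathbf{0},\sigma^2\mathbf{I})$, and parameter function $g(\mathbf{x})=x_k$ for a fixed $k\in[N]$. Let $D=\operatorname{rank}(\mathbf{H})$, $\mathbf{H}=\mathbf{U}\mathbf{\Sigma}\mathbf{V}^T$ a thin SVD and $\widetilde{\mathbf{H}}=\mathbf{V}\mathbf{\Sigma}^{-1}$. Let $\mathbf{x}_1\in\mathbb{R}^D$, $C\ge 0$, and let $(a[\mathbf{p}])_{\mathbf{p}\in\mathbb{Z}_+^D}$ satisfy $|a[\mathbf{p}]|\le C^{|\mathbf{p}|}$ for all $\mathbf{p}$. Then the function $$c(\mathbf{x})=\exp\big(\mathbf{x}_1^T\widetilde{\mathbf{H}}^{\dagger}\mathbf{x}\big)\sum_{\mathbf{p}\in\mathbb{Z}_+^D}\frac{a[\mathbf{p}]}{\mathbf{p}!}\Big(\tfrac{1}{\sigma}\widetilde{\mathbf{H}}^{\dagger}\mathbf{x}\Big)^{\mathbf{p}}-x_k,\qquad \mathbf{x}\in\mathcal{X}_S,$$ is a valid bias function at every $\mathbf{x}_0\in\mathcal{X}_S$. In particular, for $\mathbf{H}=\mathbf{I}$ (with thin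 SVD $\mathbf{U}=\mathbf{V}=\mathbf{\Sigma}=\mathbf{I}$), the choice $\mathbf{x}_1=\mathbf{0}$, $a[\mathbf{e}_k]=\sigma$ and $a[\mathbf{p}]=0$ for all other $\mathbf{p}$ yields $c\equiv 0$.
   Context: $[N]=\{1,\dots,N\}$; $\|\mathbf{x}\|_0$ = number of nonzero entries; $\operatorname{spark}$ = minimum number of linearly dependent columns; $\dagger$ = Moore–Penrose pseudoinverse. Thin SVD: $\mathbf{U}\in\mathbb{R}^{M\times D}$, $\mathbf{V}\in\mathbb{R}^{N\times D}$ with orthonormal columns, $\mathbf{\Sigma}$ diagonal positive. Multi-index notation: $|\mathbf{p}|=\sum p_l$, $\mathbf{p}!=\prod p_l!$, $\mathbf{z}^{\mathbf{p}}=\prod z_l^{p_l}$; $\mathbf{e}_k$ is the $k$th unit multi-index. An estimator $\hat g:\mathbb{R}^M\to\mathbb{R}$ has bias $b(\hat g;\mathbf{x})=\mathsf{E}_{\mathbf{x}}\{\hat g(\mathbf{y})\}-x_k$ and variance $v(\hat g;\mathbf{x})$; a bias function $c:\mathcal{X}_S\to\mathbb{R}$ is valid at $\mathbf{x}_0$ if some estimator has $v(\hat g;\mathbf{x}_0)<\infty$ and $b(\hat g;\mathbf{x})=c(\mathbf{x})$ for all $\mathbf{x}\in\mathcal{X}_S$. *)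

theory Defs
  imports "HOL-Probability.Probability"
begin

definition l0norm :: "real^'n \<Rightarrow> nat" where
  "l0norm x = card {i. x $ i \<noteq> 0}"

definition sparse_set :: "nat \<Rightarrow> (real^'n) set" where
  "sparse_set S = {x. l0norm x \<le> S}"

text \<open>spark: minimum number of linearly dependent columns (infinity if none).\<close>
definition cols_dependent :: "real^'n^'m \<Rightarrow> 'n set \<Rightarrow> bool" where
  "cols_dependent H I \<longleftrightarrow>
     (\<exists>c :: 'n \<Rightarrow> real. (\<exists>i\<in>I. c i \<noteq> 0) \<and> (\<Sum>i\<in>I. c i *\<^sub>R column i H) = 0)"

definition spark :: "real^'n^'m \<Rightarrow> enat" where
  "spark H = (INF I \<in> {I. I \<noteq> {} \<and> cols_dependent H I}. enat (card I))"

definition is_pinv :: "real^'n^'m \<Rightarrow> real^'m^'n \<Rightarrow> bool" where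
  "is_pinv A X \<longleftrightarrow> A ** X ** A = A \<and> X ** A ** X = X \<and>
     transpose (A ** X) = A ** X \<and> transpose (X ** A) = X ** A"

definition pinv :: "real^'n^'m \<Rightarrow> real^'m^'n" where
  "pinv A = (THE X. is_pinv A X)"

definition gauss_obs :: "real^'n^'m \<Rightarrow> real \<Rightarrow> real^'n \<Rightarrow> (real^'m) measure" where
  "gauss_obs H \<sigma> x =
     density lborel (\<lambda>y. ennreal (\<Prod>i\<in>UNIV. normal_density ((H *v x) $ i) \<sigma> (y $ i)))"

definition est_mean :: "real^'n^'m \<Rightarrow> real \<Rightarrow> (real^'m \<Rightarrow> real) \<Rightarrow> real^'n \<Rightarrow> real" where
  "est_mean H \<sigma> g x = (\<integral>y. g y \<partial>gauss_obs H \<sigma> x)"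

definition est_bias :: "real^'n^'m \<Rightarrow> real \<Rightarrow> 'n \<Rightarrow> (real^'m \<Rightarrow> real) \<Rightarrow> real^'n \<Rightarrow> real" where
  "est_bias H \<sigma> k g x = est_mean H \<sigma> g x - x $ k"

definition finite_variance :: "real^'n^'m \<Rightarrow> real \<Rightarrow> (real^'m \<Rightarrow> real) \<Rightarrow> real^'n \<Rightarrow> bool" where
  "finite_variance H \<sigma> g x \<longleftrightarrow>
     integrable (gauss_obs H \<sigma> x) g \<and>
     integrable (gauss_obs H \<sigma> x) (\<lambda>y. (g y - est_mean H \<sigma> g x)\<^sup>2)"

definition valid_bias :: "real^'n^'m \<Rightarrow> real \<Rightarrow> nat \<Rightarrow> 'n \<Rightarrow> (real^'n \<Rightarrow> real) \<Rightarrow> real^'n \<Rightarrow> bool" where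
  "valid_bias H \<sigma> S k c x0 \<longleftrightarrow>
     (\<exists>g :: real^'m \<Rightarrow> real. g \<in> borel_measurable borel \<and>
        finite_variance H \<sigma> g x0 \<and>
        (\<forall>x\<in>sparse_set S. integrable (gauss_obs H \<sigma> x) g \<and> est_bias H \<sigma> k g x = c x))"

definition mi_abs :: "('d::finite \<Rightarrow> nat) \<Rightarrow> nat" where
  "mi_abs p = (\<Sum>l\<in>UNIV. p l)"

definition mi_fact :: "('d::finite \<Rightarrow> nat) \<Rightarrow> real" where
  "mi_fact p = (\<Prod>l\<in>UNIV. fact (p l))"

definition mi_pow :: "real^'d \<Rightarrow> ('d::finite \<Rightarrow> nat) \<Rightarrow> real" where
  "mi_pow z p = (\<Prod>l\<in>UNIV. (z $ l) ^ (p l))"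

text \<open>The candidate bias function, given Hd = (pseudoinverse of H-tilde).\<close>
definition cbias :: "real^'n^'d \<Rightarrow> real \<Rightarrow> real^'d \<Rightarrow> (('d::finite \<Rightarrow> nat) \<Rightarrow> real) \<Rightarrow> 'n \<Rightarrow> real^'n \<Rightarrow> real" where
  "cbias Hd \<sigma> x1 a k x =
     exp (x1 \<bullet> (Hd *v x)) *
       (\<Sum>\<^sub>\<infinity>p\<in>UNIV. a p / mi_fact p * mi_pow ((1 / \<sigma>) *\<^sub>R (Hd *v x)) p)
     - x $ k"

end

theory Submission
  imports Defs
begin

text \<open>
  The bias function is realised by an explicit estimator. Rotated by the orthonormal columns of
  \<open>U\<close>, the observation \<open>z = U\<^sup>T y\<close> is Gaussian with mean \<open>\<mu> = U\<^sup>T H x = \<Sigma> V\<^sup>T x\<close>, and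
  \<open>\<Sigma> V\<^sup>T\<close> is the pseudoinverse of \<open>V \<Sigma>\<inverse>\<close>. For every \<open>s\<close> the function
  \<open>exp (s \<bullet> z - \<sigma>\<^sup>2 |s|\<^sup>2 / 2)\<close> has mean \<open>exp (s \<bullet> \<mu>)\<close>; differentiating this identity \<open>p\<close> times
  in \<open>s\<close> under the integral sign gives products of Hermite polynomials in \<open>z\<close> (times the same
  exponential) with mean \<open>\<mu>\<^sup>p exp (s \<bullet> \<mu>)\<close>. Weighting the \<open>p\<close>-th derivative at \<open>s = x\<^sub>1\<close> by
  \<open>a p / (p! \<sigma>\<^bsup>|p|\<^esup>)\<close> and summing gives an estimator with mean
  \<open>exp (x\<^sub>1 \<bullet> \<mu>) \<Sum>\<^sub>p a p / p! (\<mu> / \<sigma>)\<^sup>p\<close>, i.e. with bias \<open>c\<close>. The growth bound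
  \<open>|a p| \<le> C\<^bsup>|p|\<^esup>\<close> makes the series converge absolutely, dominated by \<open>K exp (B |y|\<^sub>1)\<close>,
  so the estimator has finite variance and its mean may be computed term by term.
\<close>

section \<open>Multi-indices\<close>

lemma infinite_UNIV_multiindex: "infinite (UNIV :: ('d \<Rightarrow> nat) set)"
  using finite_fun_UNIVD2 by blast

lemma sums_infsum_from_nat_into:
  fixes f :: "'a::countable \<Rightarrow> real"
  assumes "infinite (UNIV :: 'a set)" and "f summable_on UNIV"
  shows "(\<lambda>n. f (from_nat_into UNIV n)) sums (\<Sum>\<^sub>\<infinity>p. f p)"
proof -
  have bij: "bij_betw (from_nat_into (UNIV :: 'a set)) UNIV UNIV"
    by (rule bij_betw_from_nat_into[OF countableI_type assms(1)])
  have "(\<lambda>n. f (from_nat_into UNIV n)) summable_on UNIV"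
    using assms(2) summable_on_reindex_bij_betw[OF bij, where f=f] by simp
  moreover have "(\<Sum>\<^sub>\<infinity>n. f (from_nat_into UNIV n)) = (\<Sum>\<^sub>\<infinity>p. f p)"
    by (rule infsum_reindex_bij_betw[OF bij])
  ultimately show ?thesis
    by (metis has_sum_imp_sums has_sum_infsum)
qed

lemma mi_abs_eq_SucE:
  fixes p :: "'d::finite \<Rightarrow> nat"
  assumes "mi_abs p = Suc n"
  obtains q l where "p = q(l := Suc (q l))" and "mi_abs q = n"
proof -
  obtain l where l: "p l > 0"
    using assms unfolding mi_abs_def by (metis gr0I sum.neutral nat.simps(3))
  define q where "q = p(l := p l - 1)"
  have "mi_abs p = p l + (\<Sum>l'\<in>UNIV-{l}. p l')"
    unfolding mi_abs_def by (subst sum.remove[of UNIV l]) auto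
  moreover have "mi_abs q = q l + (\<Sum>l'\<in>UNIV-{l}. q l')"
    unfolding mi_abs_def by (subst sum.remove[of UNIV l]) auto
  moreover have "(\<Sum>l'\<in>UNIV-{l}. q l') = (\<Sum>l'\<in>UNIV-{l}. p l')"
    unfolding q_def by (rule sum.cong) auto
  ultimately have "mi_abs q = n"
    using assms l unfolding q_def by simp
  moreover have "p = q(l := Suc (q l))"
    unfolding q_def using l by (auto simp: fun_eq_iff)
  ultimately show thesis using that by blast
qed

lemma mi_pow_fun_upd_Suc: "mi_pow \<mu> (p(l := Suc (p l))) = mi_pow \<mu> p * \<mu>$l"
proof -
  have split: "mi_pow \<mu> q = (\<mu>$l)^(q l) * (\<Prod>l'\<in>UNIV-{l}. (\<mu>$l')^(q l'))" for q
    unfolding mi_pow_def by (subst prod.remove[of UNIV l]) auto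
  have "(\<Prod>l'\<in>UNIV-{l}. (\<mu>$l')^((p(l := Suc (p l))) l')) = (\<Prod>l'\<in>UNIV-{l}. (\<mu>$l')^(p l'))"
    by (rule prod.cong) auto
  then show ?thesis
    unfolding split[of "p(l := Suc (p l))"] split[of p] by simp
qed

lemma mi_pow_scaleR_inverse:
  fixes \<mu> :: "real^'d::finite"
  shows "mi_pow ((1/\<sigma>) *\<^sub>R \<mu>) p = mi_pow \<mu> p / \<sigma> ^ mi_abs p"
  unfolding mi_pow_def mi_abs_def
  by (simp add: power_sum prod_dividef power_divide field_simps)

lemma abs_coeff_le_prod:
  fixes a :: "('d::finite \<Rightarrow> nat) \<Rightarrow> real"
  assumes "\<sigma> > 0" and "\<bar>a p\<bar> \<le> C ^ mi_abs p"
  shows "\<bar>a p / mi_fact p / \<sigma> ^ mi_abs p\<bar> \<le> (\<Prod>l\<in>UNIV. (C/\<sigma>) ^ p l / fact (p l))"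
proof -
  have mf: "mi_fact p > 0" unfolding mi_fact_def by (simp add: prod_pos)
  have "\<bar>a p / mi_fact p / \<sigma> ^ mi_abs p\<bar> = \<bar>a p\<bar> / (mi_fact p * \<sigma> ^ mi_abs p)"
    using mf assms(1) by (simp add: abs_divide abs_mult)
  also have "\<dots> \<le> C ^ mi_abs p / (mi_fact p * \<sigma> ^ mi_abs p)"
    using mf assms by (intro divide_right_mono) auto
  also have "\<dots> = (\<Prod>l\<in>UNIV. (C/\<sigma>) ^ p l / fact (p l))"
    unfolding mi_abs_def mi_fact_def
    by (simp add: power_sum prod_dividef prod.distrib[symmetric] power_divide field_simps)
  finally show ?thesis .
qed

lemma
  fixes f :: "'d::finite \<Rightarrow> nat \<Rightarrow> real"
  assumes nonneg: "\<And>l n. f l n \<ge> 0" and summable: "\<And>l. summable (f l)"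
  shows summable_on_prod_multiindex: "(\<lambda>p. \<Prod>l\<in>UNIV. f l (p l)) summable_on UNIV"
    and infsum_prod_multiindex: "(\<Sum>\<^sub>\<infinity>p. \<Prod>l\<in>UNIV. f l (p l)) = (\<Prod>l\<in>UNIV. suminf (f l))"
proof -
  have s1: "f l summable_on UNIV" for l
    using summable_on_UNIV_nonneg_real_iff[of "f l"] nonneg summable by auto
  have s2: "Infinite_Set_Sum.abs_summable_on (f l) UNIV" for l
    using s1 nonneg abs_summable_equivalent by (simp add: abs_summable_equivalent[symmetric])
  have "Infinite_Set_Sum.abs_summable_on (\<lambda>g. \<Prod>l\<in>UNIV. f l (g l)) (PiE UNIV (\<lambda>_. UNIV))"
    by (rule abs_summable_on_prod_PiE) (auto intro: s2)
  then have "(\<lambda>g. norm (\<Prod>l\<in>UNIV. f l (g l))) summable_on UNIV"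
    using abs_summable_equivalent[of "\<lambda>g. \<Prod>l\<in>UNIV. f l (g l)" UNIV] by (simp add: PiE_UNIV_domain)
  then show sp: "(\<lambda>p. \<Prod>l\<in>UNIV. f l (p l)) summable_on UNIV"
    by (rule abs_summable_summable)
  have "(\<Sum>\<^sub>\<infinity>p\<in>PiE UNIV (\<lambda>_. UNIV). \<Prod>l\<in>UNIV. f l (p l)) = (\<Prod>l\<in>UNIV. infsum (f l) UNIV)"
    by (rule infsum_prod_PiE) (use s1 sp in \<open>auto simp: PiE_UNIV_domain\<close>)
  moreover have "infsum (f l) UNIV = suminf (f l)" for l
    using has_sum_imp_sums[OF has_sum_infsum[OF s1]] by (simp add: sums_iff)
  ultimately show "(\<Sum>\<^sub>\<infinity>p. \<Prod>l\<in>UNIV. f l (p l)) = (\<Prod>l\<in>UNIV. suminf (f l))"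
    by (simp add: PiE_UNIV_domain)
qed

lemma power_le_fact_mult_exp:
  assumes "(x::real) \<ge> 0"
  shows "x ^ n \<le> fact n * exp x"
proof -
  have "x ^ n / fact n \<le> (\<Sum>k<Suc n. x^k /\<^sub>R fact k)"
    using assms by (simp add: divide_inverse_commute)
      (intro add_increasing sum_nonneg, auto simp: divide_inverse_commute)
  also have "\<dots> \<le> exp x"
    using exp_converges[of x] assms
    by (intro sum_le_suminf[where f="\<lambda>k. x^k /\<^sub>R fact k", THEN order_trans]) (auto simp: sums_iff)
  finally show ?thesis by (simp add: field_simps)
qed

lemma power_add_le_two_power:
  assumes "(a::real) \<ge> 0" "b \<ge> 0"
  shows "(a + b) ^ n \<le> 2 ^ n * (a ^ n + b ^ n)"
proof -
  have "(a + b) ^ n \<le> (2 * max a b) ^ n" using assms by (intro power_mono) auto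
  also have "\<dots> = 2 ^ n * max a b ^ n" by (simp add: power_mult_distrib)
  also have "max a b ^ n \<le> a ^ n + b ^ n" using assms by (auto simp: max_def)
  finally show ?thesis by simp
qed

text \<open>Since \<open>n\<^sup>n \<le> n! e\<^sup>n\<close>, the terms are at most \<open>\<surd>((c\<^sup>2e)\<^sup>n/n!)\<close>, which AM-GM splits into
  an exponential series and a geometric one.\<close>
lemma summable_power_sqrt_div_fact:
  assumes "c \<ge> 0"
  shows "summable (\<lambda>n. c ^ n * sqrt (real n) ^ n / fact n)"
proof (rule summable_comparison_test[OF _ summable_add[OF summable_exp[of "4 * c\<^sup>2 * exp 1"] summable_geometric[of "1/4::real"]]])
  show "\<exists>N. \<forall>n\<ge>N. norm (c ^ n * sqrt (real n) ^ n / fact n) \<le> inverse (fact n) * (4 * c\<^sup>2 * exp 1) ^ n + (1 / 4) ^ n"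
  proof (intro exI allI impI)
    fix n :: nat
    have f0: "fact n > (0::real)" by simp
    have "real n ^ n \<le> fact n * exp (real n)" by (rule power_le_fact_mult_exp) simp
    then have "sqrt (real n) ^ n \<le> sqrt (fact n * exp (real n))"
      by (simp add: real_sqrt_power[symmetric] del: real_sqrt_power)
    then have "c ^ n * sqrt (real n) ^ n / fact n \<le> c ^ n * sqrt (fact n * exp (real n)) / fact n"
      using assms by (intro divide_right_mono mult_left_mono) auto
    also have "\<dots> = sqrt ((c\<^sup>2 * exp 1) ^ n / fact n)"
    proof -
      have "sqrt ((c\<^sup>2 * exp 1) ^ n / fact n) = sqrt ((c\<^sup>2) ^ n) * sqrt (exp (real n)) / sqrt (fact n)"
        by (simp add: real_sqrt_divide real_sqrt_mult power_mult_distrib exp_of_nat_mult[symmetric])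
      also have "\<dots> = c ^ n * sqrt (exp (real n)) / sqrt (fact n)"
        using assms by (simp add: power2_eq_square power_mult_distrib real_sqrt_mult)
      also have "\<dots> = c ^ n * sqrt (fact n * exp (real n)) / fact n"
        using f0 by (simp add: real_sqrt_mult field_simps)
      finally show ?thesis by simp
    qed
    also have "\<dots> = sqrt ((inverse (fact n) * (4 * c\<^sup>2 * exp 1) ^ n) * (1/4)^n)"
      by (simp add: power_mult_distrib field_simps)
    also have "\<dots> \<le> ((inverse (fact n) * (4 * c\<^sup>2 * exp 1) ^ n) + (1/4)^n) / 2"
      by (rule arith_geo_mean_sqrt) auto
    also have "\<dots> \<le> inverse (fact n) * (4 * c\<^sup>2 * exp 1) ^ n + (1 / 4) ^ n" by simp
    finally show "norm (c ^ n * sqrt (real n) ^ n / fact n) \<le> inverse (fact n) * (4 * c\<^sup>2 * exp 1) ^ n + (1 / 4) ^ n"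
      using assms by simp
  qed
qed simp

lemma abs_diff_le_of_DERIV_bound:
  assumes "\<And>t. (f has_real_derivative f' t) (at t)"
    and "\<And>t. \<bar>t - t0\<bar> \<le> 1 \<Longrightarrow> \<bar>f' t\<bar> \<le> B" and "\<bar>t - t0\<bar> \<le> 1"
  shows "\<bar>f t - f t0\<bar> \<le> B * \<bar>t - t0\<bar>"
proof -
  have "norm (f t - f t0) \<le> B * norm (t - t0)"
  proof (rule field_differentiable_bound[where S="{t0-1..t0+1}" and f'=f'])
    show "(f has_field_derivative f' z) (at z within {t0 - 1..t0 + 1})" for z
      using assms(1)[of z] by (rule has_field_derivative_at_within)
    show "norm (f' z) \<le> B" if "z \<in> {t0 - 1..t0 + 1}" for z
      using assms(2)[of z] that by auto
  qed (use assms(3) in auto)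
  then show ?thesis by simp
qed

section \<open>Differentiation under the integral sign\<close>

lemma DERIV_integral_dominated:
  fixes f f' :: "real \<Rightarrow> 'a \<Rightarrow> real"
  assumes intf: "\<And>t. integrable M (f t)"
    and mf': "f' t0 \<in> borel_measurable M"
    and der: "\<And>t y. ((\<lambda>t. f t y) has_real_derivative f' t y) (at t)"
    and G: "integrable M G" and bnd: "\<And>t y. \<bar>t - t0\<bar> \<le> 1 \<Longrightarrow> \<bar>f' t y\<bar> \<le> G y"
  shows "((\<lambda>t. \<integral>y. f t y \<partial>M) has_real_derivative (\<integral>y. f' t0 y \<partial>M)) (at t0)"
  unfolding has_field_derivative_iff tendsto_at_iff_sequentially
proof (intro allI impI)
  define Q where "Q t = ((\<integral>y. f t y \<partial>M) - (\<integral>y. f t0 y \<partial>M)) / (t - t0)" for t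
  fix X :: "nat \<Rightarrow> real"
  assume X: "\<forall>i. X i \<in> UNIV - {t0}" and Xl: "X \<longlonglongrightarrow> t0"
  from Xl have "\<forall>\<^sub>F n in sequentially. dist (X n) t0 < 1" by (rule tendstoD) simp
  then obtain N where N: "\<And>n. n \<ge> N \<Longrightarrow> \<bar>X n - t0\<bar> < 1"
    by (auto simp: eventually_sequentially dist_real_def)
  define s where "s n y = (f (X (n+N)) y - f t0 y) / (X (n+N) - t0)" for n y
  have "(\<lambda>n. integral\<^sup>L M (s n)) \<longlonglongrightarrow> integral\<^sup>L M (f' t0)"
  proof (rule integral_dominated_convergence[OF mf' _ G])
    show "s n \<in> borel_measurable M" for n unfolding s_def using intf by measurable
    show "AE y in M. (\<lambda>n. s n y) \<longlonglongrightarrow> f' t0 y"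
    proof (rule AE_I2)
      fix y
      have "((\<lambda>t. (f t y - f t0 y) / (t - t0)) \<longlongrightarrow> f' t0 y) (at t0)"
        using der[of y t0] unfolding has_field_derivative_iff .
      then have "((\<lambda>t. (f t y - f t0 y) / (t - t0)) \<circ> (\<lambda>n. X (n + N))) \<longlonglongrightarrow> f' t0 y"
        unfolding tendsto_at_iff_sequentially using X LIMSEQ_ignore_initial_segment[OF Xl, of N] by auto
      then show "(\<lambda>n. s n y) \<longlonglongrightarrow> f' t0 y" unfolding s_def o_def .
    qed
    show "AE y in M. norm (s n y) \<le> G y" for n
    proof (rule AE_I2)
      fix y
      have "\<bar>f (X (n+N)) y - f t0 y\<bar> \<le> G y * \<bar>X (n+N) - t0\<bar>"
        using abs_diff_le_of_DERIV_bound[OF der bnd] N[of "n+N"] by auto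
      then show "norm (s n y) \<le> G y"
        unfolding s_def using X by (simp add: abs_divide divide_le_eq)
    qed
  qed
  moreover have "integral\<^sup>L M (s n) = Q (X (n + N))" for n
    unfolding s_def Q_def using intf by (simp add: integral_diff)
  ultimately have "(\<lambda>n. Q (X (n + N))) \<longlonglongrightarrow> (\<integral>y. f' t0 y \<partial>M)"
    by simp
  then have "(\<lambda>n. Q (X n)) \<longlonglongrightarrow> (\<integral>y. f' t0 y \<partial>M)"
    by (rule LIMSEQ_offset)
  then show "((\<lambda>t. ((\<integral>y. f t y \<partial>M) - (\<integral>y. f t0 y \<partial>M)) / (t - t0)) \<circ> X) \<longlonglongrightarrow> (\<integral>y. f' t0 y \<partial>M)"
    unfolding Q_def o_def .
qed

lemma Basis_vec_eq_range_axis: "(Basis :: (real^'m::finite) set) = range (\<lambda>j. axis j 1)"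
  unfolding Basis_vec_def by auto

lemma inj_axis_1: "inj (\<lambda>j::'m::finite. axis j (1::real))"
  by (auto simp: inj_on_def axis_eq_axis)

lemma inv_axis_1 [simp]: "inv (\<lambda>j::'m::finite. axis j (1::real)) (axis i 1) = i"
  using inv_f_f[OF inj_axis_1, of i] by simp

lemma nth_sum_Basis_scaleR:
  fixes \<omega> :: "(real^'m::finite) \<Rightarrow> real"
  shows "(\<Sum>b\<in>Basis. \<omega> b *\<^sub>R b) $ i = \<omega> (axis i 1)"
proof -
  have "(\<Sum>b\<in>Basis. \<omega> b *\<^sub>R b) $ i = (\<Sum>b\<in>Basis. \<omega> b * (b $ i))" by simp
  also have "\<dots> = (\<Sum>j\<in>UNIV. \<omega> (axis j 1) * (axis j (1::real) $ i))"
    unfolding Basis_vec_eq_range_axis by (subst sum.reindex[OF inj_axis_1]) auto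
  also have "\<dots> = \<omega> (axis i 1)"
    by (simp add: axis_def if_distrib cong: if_cong)
  finally show ?thesis .
qed

lemma
  fixes \<phi> :: "'m::finite \<Rightarrow> real \<Rightarrow> real"
  assumes int: "\<And>i. integrable lborel (\<phi> i)"
  shows integrable_lborel_vec_prod: "integrable lborel (\<lambda>y::real^'m. \<Prod>i\<in>UNIV. \<phi> i (y$i))"
    and integral_lborel_vec_prod:
      "(\<integral>y. (\<Prod>i\<in>UNIV. \<phi> i (y$i)) \<partial>(lborel::(real^'m) measure)) = (\<Prod>i\<in>UNIV. \<integral>t. \<phi> i t \<partial>lborel)"
proof -
  interpret P: product_sigma_finite "\<lambda>_::real^'m. lborel::real measure"
    by (auto simp: product_sigma_finite_def intro: sigma_finite_lborel)
  define T where "T = (\<lambda>f::(real^'m) \<Rightarrow> real. \<Sum>b\<in>Basis. f b *\<^sub>R b)"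
  define \<psi> where "\<psi> = (\<lambda>b::real^'m. \<phi> (inv (\<lambda>j::'m. axis j (1::real)) b))"
  have Tm: "T \<in> measurable (\<Pi>\<^sub>M b\<in>Basis. lborel) borel" unfolding T_def by measurable
  have eq: "(\<Prod>i\<in>UNIV. \<phi> i (T \<omega> $ i)) = (\<Prod>b\<in>Basis. \<psi> b (\<omega> b))" for \<omega>
  proof -
    have "(\<Prod>b\<in>Basis. \<psi> b (\<omega> b)) = (\<Prod>j\<in>UNIV. \<psi> (axis j 1) (\<omega> (axis j 1)))"
      unfolding Basis_vec_eq_range_axis using inj_axis_1 by (subst prod.reindex) auto
    then show ?thesis unfolding T_def nth_sum_Basis_scaleR \<psi>_def by simp
  qed
  have psi_int: "\<And>b. b \<in> Basis \<Longrightarrow> integrable lborel (\<psi> b)" unfolding \<psi>_def using int by auto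
  have pm: "(\<lambda>y::real^'m. \<Prod>i\<in>UNIV. \<phi> i (y$i)) \<in> borel_measurable borel"
    using int by measurable
  have "integrable (\<Pi>\<^sub>M b\<in>Basis. lborel) (\<lambda>\<omega>. \<Prod>b\<in>Basis. \<psi> b (\<omega> b))"
    by (rule P.product_integrable_prod) (auto intro: psi_int)
  then have "integrable (\<Pi>\<^sub>M b\<in>Basis. lborel) (\<lambda>\<omega>. \<Prod>i\<in>UNIV. \<phi> i (T \<omega> $ i))"
    unfolding eq .
  then show "integrable lborel (\<lambda>y::real^'m. \<Prod>i\<in>UNIV. \<phi> i (y$i))"
    by (subst lborel_eq, subst integrable_distr_eq[OF Tm[unfolded T_def] pm]) (simp add: T_def o_def)
  have "(\<integral>y. (\<Prod>i\<in>UNIV. \<phi> i (y$i)) \<partial>(lborel::(real^'m) measure)) =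
     (\<integral>\<omega>. (\<Prod>i\<in>UNIV. \<phi> i (T \<omega> $ i)) \<partial>(\<Pi>\<^sub>M b\<in>Basis. lborel))"
    by (subst lborel_eq, subst integral_distr[OF Tm[unfolded T_def] pm]) (simp add: T_def)
  also have "\<dots> = (\<Prod>b\<in>Basis. \<integral>t. \<psi> b t \<partial>lborel)"
    unfolding eq by (rule P.product_integral_prod) (auto intro: psi_int)
  also have "\<dots> = (\<Prod>i\<in>UNIV. \<integral>t. \<phi> i t \<partial>lborel)"
    unfolding Basis_vec_eq_range_axis using inj_axis_1 by (subst prod.reindex) (auto simp: \<psi>_def)
  finally show "(\<integral>y. (\<Prod>i\<in>UNIV. \<phi> i (y$i)) \<partial>(lborel::(real^'m) measure)) = (\<Prod>i\<in>UNIV. \<integral>t. \<phi> i t \<partial>lborel)" .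
qed

definition gauss_measure :: "real \<Rightarrow> real^'m::finite \<Rightarrow> (real^'m) measure" where
  "gauss_measure \<sigma> m = density lborel (\<lambda>y. ennreal (\<Prod>i\<in>UNIV. normal_density (m$i) \<sigma> (y$i)))"

lemma gauss_obs_eq_gauss_measure: "gauss_obs H \<sigma> x = gauss_measure \<sigma> (H *v x)"
  unfolding gauss_obs_def gauss_measure_def by simp

lemma normal_density_mult_exp:
  assumes "\<sigma> > 0"
  shows "normal_density m \<sigma> t * exp (a*t) = exp (a*m + \<sigma>\<^sup>2*a\<^sup>2/2) * normal_density (m + \<sigma>\<^sup>2*a) \<sigma> t"
proof -
  have "-(t - m)\<^sup>2/ (2 * \<sigma>\<^sup>2) + a*t = (a*m + \<sigma>\<^sup>2*a\<^sup>2/2) + (-(t - (m + \<sigma>\<^sup>2*a))\<^sup>2/ (2 * \<sigma>\<^sup>2))"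
    using assms by (simp add: field_simps power2_eq_square)
  then show ?thesis unfolding normal_density_def
    by (simp add: exp_add[symmetric] mult_exp_exp)
qed

lemma
  assumes "\<sigma> > 0"
  shows integrable_normal_density_mult_exp: "integrable lborel (\<lambda>t. normal_density m \<sigma> t * exp (a*t))"
    and integral_normal_density_mult_exp:
      "(\<integral>t. normal_density m \<sigma> t * exp (a*t) \<partial>lborel) = exp (a*m + \<sigma>\<^sup>2*a\<^sup>2/2)"
  unfolding normal_density_mult_exp[OF assms] using assms by auto

lemma integrable_normal_density_mult_exp_abs:
  assumes "\<sigma> > 0"
  shows "integrable lborel (\<lambda>t. normal_density m \<sigma> t * exp (b*\<bar>t\<bar>))"
proof (rule Bochner_Integration.integrable_bound)
  show "integrable lborel (\<lambda>t. normal_density m \<sigma> t * exp (b*t) + normal_density m \<sigma> t * exp ((-b)*t))"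
    using assms by (intro Bochner_Integration.integrable_add integrable_normal_density_mult_exp)
  show "AE t in lborel. norm (normal_density m \<sigma> t * exp (b*\<bar>t\<bar>))
     \<le> norm (normal_density m \<sigma> t * exp (b*t) + normal_density m \<sigma> t * exp ((-b)*t))"
  proof (intro AE_I2)
    fix t
    have "exp (b*\<bar>t\<bar>) \<le> exp (b*t) + exp ((-b)*t)"
      by (cases "t \<ge> 0") (auto simp: add_increasing add_increasing2)
    then have "normal_density m \<sigma> t * exp (b*\<bar>t\<bar>) \<le> normal_density m \<sigma> t * (exp (b*t) + exp ((-b)*t))"
      by (intro mult_left_mono) auto
    then show "norm (normal_density m \<sigma> t * exp (b*\<bar>t\<bar>))
     \<le> norm (normal_density m \<sigma> t * exp (b*t) + normal_density m \<sigma> t * exp ((-b)*t))"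
      by (simp add: algebra_simps)
  qed
qed measurable

lemma
  fixes f :: "'m::finite \<Rightarrow> real \<Rightarrow> real"
  assumes "\<sigma> > 0" and [measurable]: "\<And>i. f i \<in> borel_measurable borel"
    and int: "\<And>i. integrable lborel (\<lambda>t. normal_density (m$i) \<sigma> t * f i t)"
  shows integrable_gauss_measure_prod: "integrable (gauss_measure \<sigma> m) (\<lambda>y. \<Prod>i\<in>UNIV. f i (y$i))"
    and integral_gauss_measure_prod: "(\<integral>y. (\<Prod>i\<in>UNIV. f i (y$i)) \<partial>gauss_measure \<sigma> m)
      = (\<Prod>i\<in>UNIV. \<integral>t. normal_density (m$i) \<sigma> t * f i t \<partial>lborel)"
proof -
  have eq: "(\<Prod>i\<in>UNIV. normal_density (m$i) \<sigma> (y$i)) * (\<Prod>i\<in>UNIV. f i (y$i))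
      = (\<Prod>i\<in>UNIV. normal_density (m$i) \<sigma> (y$i) * f i (y$i))" for y :: "real^'m"
    by (simp add: prod.distrib)
  show "integrable (gauss_measure \<sigma> m) (\<lambda>y. \<Prod>i\<in>UNIV. f i (y$i))"
    unfolding gauss_measure_def
    by (subst integrable_density) (auto simp: eq prod_nonneg intro!: integrable_lborel_vec_prod int)
  show "(\<integral>y. (\<Prod>i\<in>UNIV. f i (y$i)) \<partial>gauss_measure \<sigma> m)
      = (\<Prod>i\<in>UNIV. \<integral>t. normal_density (m$i) \<sigma> t * f i t \<partial>lborel)"
    unfolding gauss_measure_def
    by (subst integral_density) (auto simp: eq prod_nonneg intro!: integral_lborel_vec_prod int)
qed

lemma integrable_gauss_measure_exp_sum_abs:
  assumes "\<sigma> > 0"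
  shows "integrable (gauss_measure \<sigma> m) (\<lambda>y. exp (B * (\<Sum>i\<in>UNIV. \<bar>y$i\<bar>)))"
proof -
  have "integrable (gauss_measure \<sigma> m) (\<lambda>y. \<Prod>i\<in>UNIV. exp (B * \<bar>y$i\<bar>))"
    using assms by (intro integrable_gauss_measure_prod integrable_normal_density_mult_exp_abs) auto
  then show ?thesis by (simp add: sum_distrib_left exp_sum)
qed

lemma integrable_gauss_measure_exp_bounded:
  assumes "\<sigma> > 0" "f \<in> borel_measurable borel" "\<And>y. \<bar>f y\<bar> \<le> K * exp (B * (\<Sum>i\<in>UNIV. \<bar>y$i\<bar>))"
  shows "integrable (gauss_measure \<sigma> (m::real^'m::finite)) f"
proof (rule Bochner_Integration.integrable_bound)
  show "integrable (gauss_measure \<sigma> m) (\<lambda>y. K * exp (B * (\<Sum>i\<in>UNIV. \<bar>y$i\<bar>)))"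
    using integrable_gauss_measure_exp_sum_abs[OF assms(1)] by auto
  show "f \<in> borel_measurable (gauss_measure \<sigma> m)"
    using assms(2) unfolding gauss_measure_def by simp
  show "AE x in gauss_measure \<sigma> m. norm (f x) \<le> norm (K * exp (B * (\<Sum>i\<in>UNIV. \<bar>x$i\<bar>)))"
    using assms(3) by (auto intro!: AE_I2 order_trans[OF _ abs_ge_self])
qed

lemma integrable_gauss_measure_power2_diff:
  assumes "\<sigma> > 0" "f \<in> borel_measurable borel" "B \<ge> 0"
    and bound: "\<And>y. \<bar>f y\<bar> \<le> K * exp (B * (\<Sum>i\<in>UNIV. \<bar>y$i\<bar>))"
  shows "integrable (gauss_measure \<sigma> (m::real^'m::finite)) (\<lambda>y. (f y - r)\<^sup>2)"
proof (rule integrable_gauss_measure_exp_bounded[OF assms(1), of _ "2 * K\<^sup>2 + 2 * r\<^sup>2" "2 * B"])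
  show "(\<lambda>y. (f y - r)\<^sup>2) \<in> borel_measurable borel" using assms(2) by measurable
  fix y :: "real^'m"
  define E where "E = exp (B * (\<Sum>i\<in>UNIV. \<bar>y$i\<bar>))"
  have "1 \<le> E" unfolding E_def using assms(3) by (simp add: sum_nonneg)
  then have E2: "1 \<le> E\<^sup>2" by (simp add: one_le_power)
  have "(f y)\<^sup>2 \<le> (K * E)\<^sup>2"
    using bound[of y] power_mono[OF _ abs_ge_zero, of "f y" "K * E" 2] unfolding E_def by simp
  moreover have "(f y - r)\<^sup>2 + (f y + r)\<^sup>2 = 2 * (f y)\<^sup>2 + 2 * r\<^sup>2"
    by (simp add: power2_eq_square algebra_simps)
  moreover have "(f y + r)\<^sup>2 \<ge> 0" by simp
  ultimately have "\<bar>(f y - r)\<^sup>2\<bar> \<le> 2 * (K * E)\<^sup>2 + 2 * r\<^sup>2"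
    unfolding abs_power2 by linarith
  also have "\<dots> \<le> (2 * K\<^sup>2 + 2 * r\<^sup>2) * E\<^sup>2"
    using mult_left_mono[OF E2, of "2 * r\<^sup>2"] by (simp add: power_mult_distrib algebra_simps)
  also have "E\<^sup>2 = exp (2 * B * (\<Sum>i\<in>UNIV. \<bar>y$i\<bar>))"
    unfolding E_def by (simp add: power2_eq_square exp_add[symmetric])
  finally show "\<bar>(f y - r)\<^sup>2\<bar> \<le> (2 * K\<^sup>2 + 2 * r\<^sup>2) * exp (2 * B * (\<Sum>i\<in>UNIV. \<bar>y$i\<bar>))" .
qed

section \<open>Hermite polynomials and derivatives of the Gaussian generating function\<close>

text \<open>\<open>hermite v n\<close> is the Hermite polynomial of degree \<open>n\<close> for variance \<open>v\<close>, so that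
  \<open>hermite 1\<close> is the probabilists' \<open>He\<^sub>n\<close> and \<open>hermite v n w = v\<^bsup>n/2\<^esup> He\<^sub>n (w / \<surd>v)\<close>.\<close>
fun hermite :: "real \<Rightarrow> nat \<Rightarrow> real \<Rightarrow> real" where
  "hermite v 0 w = 1"
| "hermite v (Suc 0) w = w"
| "hermite v (Suc (Suc n)) w = w * hermite v (Suc n) w - real (Suc n) * v * hermite v n w"

lemma hermite_Suc: "hermite v (Suc n) w = w * hermite v n w - real n * v * hermite v (n - 1) w"
  by (cases n) auto

lemma DERIV_hermite: "(hermite v n has_real_derivative (real n * hermite v (n - 1) w)) (at w)"
proof (induction v n w rule: hermite.induct)
  case (3 v n w)
  have IH: "(hermite v (Suc n) has_real_derivative real (Suc n) * hermite v n w) (at w)"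
    "(hermite v n has_real_derivative real n * hermite v (n - 1) w) (at w)"
    using "3.IH" by simp_all
  have "((\<lambda>w. w * hermite v (Suc n) w - real (Suc n) * v * hermite v n w) has_real_derivative
      (1 * hermite v (Suc n) w + (real (Suc n) * hermite v n w) * w
        - real (Suc n) * v * (real n * hermite v (n - 1) w))) (at w)"
    by (intro DERIV_diff DERIV_mult DERIV_ident DERIV_cmult IH)
  moreover have "1 * hermite v (Suc n) w + (real (Suc n) * hermite v n w) * w
      - real (Suc n) * v * (real n * hermite v (n - 1) w) = real (Suc (Suc n)) * hermite v (Suc n) w"
    using arg_cong[OF hermite_Suc[of v n w], of "\<lambda>x. real (Suc n) * x"] by (simp add: algebra_simps)
  ultimately show ?case by simp
qed (auto intro!: derivative_eq_intros)

lemma continuous_on_hermite: "continuous_on UNIV (hermite v n)"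
  by (rule continuous_at_imp_continuous_on) (auto intro: DERIV_isCont[OF DERIV_hermite])

lemma abs_hermite_le:
  assumes "v \<ge> 0"
  shows "\<bar>hermite v n w\<bar> \<le> (\<bar>w\<bar> + sqrt (v * real n)) ^ n"
  using assms
proof (induction v n w rule: hermite.induct)
  case (3 v k w)
  define r where "r = \<bar>w\<bar>"
  define a where "a = r + sqrt (v * real (Suc k))"
  define b where "b = r + sqrt (v * real (Suc (Suc k)))"
  have r0: "r \<ge> 0" unfolding r_def by simp
  have ab: "0 \<le> a" "a \<le> b"
    unfolding b_def a_def using "3.prems" r0 by (auto intro!: real_sqrt_le_mono mult_left_mono)
  have I1: "\<bar>hermite v (Suc k) w\<bar> \<le> a ^ Suc k"
    using "3.IH" "3.prems" unfolding a_def r_def by simp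
  have I2: "\<bar>hermite v k w\<bar> \<le> a ^ k"
  proof -
    have "r + sqrt (v * real k) \<le> a"
      unfolding a_def using "3.prems" by (auto intro!: real_sqrt_le_mono mult_left_mono)
    then have "(r + sqrt (v * real k)) ^ k \<le> a ^ k"
      using r0 "3.prems" by (intro power_mono) auto
    then show ?thesis using "3.IH" "3.prems" unfolding r_def by fastforce
  qed
  have "\<bar>hermite v (Suc (Suc k)) w\<bar> \<le> r * \<bar>hermite v (Suc k) w\<bar> + real (Suc k) * v * \<bar>hermite v k w\<bar>"
    using "3.prems" abs_triangle_ineq4[of "w * hermite v (Suc k) w" "real (Suc k) * v * hermite v k w"]
    unfolding r_def by (simp add: abs_mult)
  also have "\<dots> \<le> r * a ^ Suc k + real (Suc k) * v * a ^ k"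
    using I1 I2 r0 "3.prems" by (intro add_mono mult_left_mono) auto
  also have "\<dots> = a ^ k * (r * a + real (Suc k) * v)" by (simp add: algebra_simps)
  also have "\<dots> \<le> b ^ k * b\<^sup>2"
  proof (intro mult_mono power_mono)
    have "sqrt (v * real (Suc k)) \<le> sqrt (v * real (Suc (Suc k)))"
      using "3.prems" by (intro real_sqrt_le_mono mult_left_mono) auto
    moreover have "0 \<le> sqrt (v * real (Suc (Suc k)))"
      using "3.prems" by simp
    ultimately have sq: "sqrt (v * real (Suc k)) \<le> 2 * sqrt (v * real (Suc (Suc k)))"
      by linarith
    have "r * a + real (Suc k) * v = r\<^sup>2 + r * sqrt (v * real (Suc k)) + v * real (Suc k)"
      unfolding a_def by (simp add: algebra_simps power2_eq_square)
    also have "\<dots> \<le> r\<^sup>2 + r * (2 * sqrt (v * real (Suc (Suc k)))) + v * real (Suc (Suc k))"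
      using sq r0 "3.prems" by (intro add_mono mult_left_mono) auto
    also have "\<dots> = b\<^sup>2" unfolding b_def using "3.prems"
      by (simp add: power2_eq_square algebra_simps)
    finally show "r * a + real (Suc k) * v \<le> b\<^sup>2" .
  qed (use ab r0 "3.prems" in auto)
  also have "\<dots> = b ^ Suc (Suc k)" by (simp add: power2_eq_square algebra_simps)
  finally show ?case unfolding b_def r_def .
qed auto

text \<open>\<open>hermite_gen v n t z\<close> is the \<open>n\<close>-th derivative in \<open>t\<close> of the generating function
  \<open>exp (t z - v t\<^sup>2 / 2)\<close>.\<close>
definition hermite_gen :: "real \<Rightarrow> nat \<Rightarrow> real \<Rightarrow> real \<Rightarrow> real" where
  "hermite_gen v n t z = exp (t*z - v * t\<^sup>2/2) * hermite v n (z - v * t)"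

lemma DERIV_hermite_gen: "((\<lambda>t. hermite_gen v n t z) has_real_derivative hermite_gen v (Suc n) t z) (at t)"
proof -
  have "((\<lambda>t. exp (t*z - v * t\<^sup>2/2) * hermite v n (z - v * t)) has_real_derivative
      exp (t*z - v * t\<^sup>2/2) * (z - v * t) * hermite v n (z - v * t)
      + real n * hermite v (n - 1) (z - v * t) * (- v) * exp (t*z - v * t\<^sup>2/2)) (at t)"
    by (intro DERIV_mult DERIV_chain2[OF DERIV_exp] DERIV_chain2[OF DERIV_hermite])
      (auto intro!: derivative_eq_intros simp: power2_eq_square algebra_simps)
  moreover have "exp (t*z - v * t\<^sup>2/2) * (z - v * t) * hermite v n (z - v * t)
      + real n * hermite v (n - 1) (z - v * t) * (- v) * exp (t*z - v * t\<^sup>2/2) = hermite_gen v (Suc n) t z"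
    unfolding hermite_gen_def hermite_Suc[of v n] by (simp add: algebra_simps)
  ultimately show ?thesis unfolding hermite_gen_def by simp
qed

lemma abs_hermite_gen_le:
  assumes "v \<ge> 0" "\<bar>t\<bar> \<le> R"
  shows "\<bar>hermite_gen v n t z\<bar> \<le> exp (R * \<bar>z\<bar>) * (\<bar>z\<bar> + v * R + sqrt (v * real n)) ^ n"
proof -
  have "t*z \<le> R * \<bar>z\<bar>"
    using assms(2) abs_ge_self[of "t * z"] mult_right_mono[OF assms(2) abs_ge_zero[of z]]
    by (simp add: abs_mult)
  moreover have "v * t\<^sup>2/2 \<ge> 0" using assms by simp
  ultimately have e: "exp (t*z - v * t\<^sup>2/2) \<le> exp (R * \<bar>z\<bar>)" by simp
  have "\<bar>v * t\<bar> \<le> v * R" using assms by (simp add: abs_mult mult_left_mono)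
  then have "\<bar>z - v * t\<bar> + sqrt (v * real n) \<le> \<bar>z\<bar> + v * R + sqrt (v * real n)"
    using abs_triangle_ineq4[of z "v * t"] by linarith
  then have "(\<bar>z - v * t\<bar> + sqrt (v * real n)) ^ n \<le> (\<bar>z\<bar> + v * R + sqrt (v * real n)) ^ n"
    by (rule power_mono) (use assms in simp)
  then have h: "\<bar>hermite v n (z - v * t)\<bar> \<le> (\<bar>z\<bar> + v * R + sqrt (v * real n)) ^ n"
    using abs_hermite_le[OF assms(1), of n "z - v * t"] by linarith
  show ?thesis unfolding hermite_gen_def abs_mult
    using e h by (intro mult_mono) auto
qed

lemma abs_hermite_gen_le_exp:
  assumes "v \<ge> 0" "\<bar>t\<bar> \<le> R"
  shows "\<bar>hermite_gen v n t z\<bar> \<le> (fact n * exp (v * R + sqrt (v * real n))) * exp ((R+1) * \<bar>z\<bar>)"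
proof -
  have "(\<bar>z\<bar> + v * R + sqrt (v * real n)) ^ n \<le> fact n * exp (\<bar>z\<bar> + v * R + sqrt (v * real n))"
    using assms by (intro power_le_fact_mult_exp) auto
  then have "exp (R * \<bar>z\<bar>) * (\<bar>z\<bar> + v * R + sqrt (v * real n)) ^ n
      \<le> exp (R * \<bar>z\<bar>) * (fact n * exp (\<bar>z\<bar> + v * R + sqrt (v * real n)))"
    by (rule mult_left_mono) simp
  then have "\<bar>hermite_gen v n t z\<bar> \<le> exp (R * \<bar>z\<bar>) * (fact n * exp (\<bar>z\<bar> + v * R + sqrt (v * real n)))"
    using abs_hermite_gen_le[OF assms, of n z] by linarith
  also have "\<dots> = (fact n * exp (v * R + sqrt (v * real n))) * exp ((R+1) * \<bar>z\<bar>)"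
    by (simp add: algebra_simps exp_add[symmetric])
  finally show ?thesis .
qed

lemma hermite_gen_term_le:
  assumes "v \<ge> 0" "C \<ge> 0"
  shows "C ^ n / fact n * \<bar>hermite_gen v n t z\<bar> \<le> exp (\<bar>t\<bar> * \<bar>z\<bar>) *
    ((2*C*(\<bar>z\<bar> + v * \<bar>t\<bar>)) ^ n / fact n + (2 * C * sqrt v) ^ n * sqrt (real n) ^ n / fact n)"
proof -
  have "\<bar>hermite_gen v n t z\<bar> \<le> exp (\<bar>t\<bar> * \<bar>z\<bar>) * (\<bar>z\<bar> + v * \<bar>t\<bar> + sqrt (v * real n)) ^ n"
    by (rule abs_hermite_gen_le[OF assms(1)]) simp
  also have "\<dots> \<le> exp (\<bar>t\<bar> * \<bar>z\<bar>) * (2 ^ n * ((\<bar>z\<bar> + v * \<bar>t\<bar>) ^ n + sqrt (v * real n) ^ n))"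
    using assms by (intro mult_left_mono power_add_le_two_power) auto
  finally have "C ^ n / fact n * \<bar>hermite_gen v n t z\<bar>
      \<le> C ^ n / fact n * (exp (\<bar>t\<bar> * \<bar>z\<bar>) * (2 ^ n * ((\<bar>z\<bar> + v * \<bar>t\<bar>) ^ n + sqrt (v * real n) ^ n)))"
    using assms by (intro mult_left_mono) auto
  then show ?thesis
    unfolding real_sqrt_mult power_mult_distrib by (simp add: algebra_simps)
qed

lemma hermite_gen_series_bound:
  assumes "v \<ge> 0" "C \<ge> 0"
  shows "\<exists>K\<ge>0. \<forall>z. summable (\<lambda>n. C ^ n / fact n * \<bar>hermite_gen v n t z\<bar>) \<and>
    (\<Sum>n. C ^ n / fact n * \<bar>hermite_gen v n t z\<bar>) \<le> K * exp ((\<bar>t\<bar> + 2*C) * \<bar>z\<bar>)"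
proof -
  define B where "B n = (2 * C * sqrt v) ^ n * sqrt (real n) ^ n / fact n" for n
  have sB: "summable B" unfolding B_def using summable_power_sqrt_div_fact[of "2 * C * sqrt v"] assms by simp
  have "\<And>n. B n \<ge> 0" unfolding B_def using assms by simp
  then have B0: "suminf B \<ge> 0" by (rule suminf_nonneg[OF sB])
  show ?thesis
  proof (intro exI[of _ "exp (2 * C * v * \<bar>t\<bar>) + suminf B"] conjI allI)
    show "exp (2 * C * v * \<bar>t\<bar>) + suminf B \<ge> 0"
      using B0 by (intro add_nonneg_nonneg) auto
    fix z
    define A where "A n = (2*C*(\<bar>z\<bar> + v * \<bar>t\<bar>)) ^ n / fact n" for n
    have sA: "A sums exp (2*C*(\<bar>z\<bar> + v * \<bar>t\<bar>))" unfolding A_def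
      using exp_converges[of "2*C*(\<bar>z\<bar> + v * \<bar>t\<bar>)"] by (simp add: divide_inverse_commute)
    have bnd: "C ^ n / fact n * \<bar>hermite_gen v n t z\<bar> \<le> exp (\<bar>t\<bar> * \<bar>z\<bar>) * (A n + B n)" for n
      unfolding A_def B_def by (rule hermite_gen_term_le[OF assms])
    have sAB: "(\<lambda>n. exp (\<bar>t\<bar> * \<bar>z\<bar>) * (A n + B n)) sums (exp (\<bar>t\<bar> * \<bar>z\<bar>) * (exp (2*C*(\<bar>z\<bar> + v * \<bar>t\<bar>)) + suminf B))"
      by (intro sums_mult sums_add sA summable_sums sB)
    show sm: "summable (\<lambda>n. C ^ n / fact n * \<bar>hermite_gen v n t z\<bar>)"
      by (rule summable_comparison_test[OF _ sums_summable[OF sAB]]) (use bnd assms in auto)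
    have "(\<Sum>n. C ^ n / fact n * \<bar>hermite_gen v n t z\<bar>) \<le> exp (\<bar>t\<bar> * \<bar>z\<bar>) * (exp (2*C*(\<bar>z\<bar> + v * \<bar>t\<bar>)) + suminf B)"
      using suminf_le[OF bnd sm sums_summable[OF sAB]] sAB by (simp add: sums_iff)
    also have "\<dots> \<le> (exp (2 * C * v * \<bar>t\<bar>) + suminf B) * exp ((\<bar>t\<bar> + 2*C) * \<bar>z\<bar>)"
    proof -
      have "exp (\<bar>t\<bar> * \<bar>z\<bar>) * suminf B \<le> exp ((\<bar>t\<bar> + 2*C) * \<bar>z\<bar>) * suminf B"
        using B0 assms by (intro mult_right_mono) (auto simp: algebra_simps)
      moreover have "exp (\<bar>t\<bar> * \<bar>z\<bar>) * exp (2*C*(\<bar>z\<bar> + v * \<bar>t\<bar>)) = exp (2 * C * v * \<bar>t\<bar>) * exp ((\<bar>t\<bar> + 2*C) * \<bar>z\<bar>)"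
        by (simp add: exp_add[symmetric] algebra_simps)
      ultimately show ?thesis by (simp add: algebra_simps)
    qed
    finally show "(\<Sum>n. C ^ n / fact n * \<bar>hermite_gen v n t z\<bar>) \<le> (exp (2 * C * v * \<bar>t\<bar>) + suminf B) * exp ((\<bar>t\<bar> + 2*C) * \<bar>z\<bar>)" .
  qed
qed

lemma inner_matrix_vector_transpose: "(U *v s) \<bullet> y = s \<bullet> (transpose U *v y)"
  for U :: "real^'d^'m" and s :: "real^'d" and y :: "real^'m"
proof -
  have "s \<bullet> (transpose U *v y) = (y v* U) \<bullet> s" by (simp add: inner_commute)
  also have "\<dots> = y \<bullet> (U *v s)" by (rule dot_lmul_matrix)
  finally show ?thesis by (simp add: inner_commute)
qed

lemma inner_orthonormal_cols_self:
  fixes U :: "real^'d^'m"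
  assumes "transpose U ** U = mat 1"
  shows "(U *v s) \<bullet> (U *v s) = s \<bullet> s"
  by (simp add: inner_matrix_vector_transpose matrix_vector_mul_assoc assms)

lemma abs_orthonormal_cols_entry_le_1:
  fixes U :: "real^'d^'m"
  assumes "transpose U ** U = mat 1"
  shows "\<bar>U$i$l\<bar> \<le> 1"
proof -
  have "(\<Sum>i\<in>UNIV. (U$i$l)\<^sup>2) = 1"
    using arg_cong[OF assms, of "\<lambda>A. A$l$l"]
    by (simp add: matrix_matrix_mult_def transpose_def mat_def power2_eq_square)
  moreover have "(U$i$l)\<^sup>2 \<le> (\<Sum>i\<in>UNIV. (U$i$l)\<^sup>2)"
    by (rule member_le_sum) auto
  ultimately show ?thesis by (simp add: abs_square_le_1)
qed

lemma abs_orthonormal_cols_transpose_mult_le: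
  fixes U :: "real^'d^'m"
  assumes "transpose U ** U = mat 1"
  shows "\<bar>(transpose U *v y)$l\<bar> \<le> (\<Sum>i\<in>UNIV. \<bar>y$i\<bar>)"
proof -
  have "\<bar>(transpose U *v y)$l\<bar> = \<bar>\<Sum>i\<in>UNIV. U$i$l * y$i\<bar>"
    by (simp add: matrix_vector_mult_def transpose_def)
  also have "\<dots> \<le> (\<Sum>i\<in>UNIV. \<bar>U$i$l * y$i\<bar>)" by (rule sum_abs)
  also have "\<dots> \<le> (\<Sum>i\<in>UNIV. \<bar>y$i\<bar>)"
    by (intro sum_mono) (simp add: abs_mult mult_left_le_one_le abs_orthonormal_cols_entry_le_1[OF assms])
  finally show ?thesis .
qed

section \<open>Unbiased estimators of the moments \<open>\<mu>\<^sup>p exp (s \<bullet> \<mu>)\<close>\<close>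

text \<open>\<open>hermite_prod v U p s y\<close> is \<open>\<partial>\<^sub>s\<^sup>p exp (s \<bullet> z - v |s|\<^sup>2 / 2)\<close> at \<open>z = U\<^sup>T y\<close>.\<close>
definition hermite_prod :: "real \<Rightarrow> real^'d^'m \<Rightarrow> ('d \<Rightarrow> nat) \<Rightarrow> real^'d \<Rightarrow> real^'m \<Rightarrow> real" where
  "hermite_prod v U p s y = (\<Prod>l\<in>UNIV. hermite_gen v (p l) (s$l) ((transpose U *v y)$l))"

lemma borel_measurable_hermite_prod: "hermite_prod v U p s \<in> borel_measurable borel"
proof (rule borel_measurable_continuous_onI)
  have "hermite_prod v U p s = (\<lambda>y. \<Prod>l\<in>UNIV. exp (s$l * (\<Sum>i\<in>UNIV. U$i$l * y$i) - v * (s$l)\<^sup>2/2) *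
     hermite v (p l) ((\<Sum>i\<in>UNIV. U$i$l * y$i) - v * s$l))"
    unfolding hermite_prod_def hermite_gen_def by (simp add: matrix_vector_mult_def transpose_def)
  then show "continuous_on UNIV (hermite_prod v U p s)"
    by (simp only:) (intro continuous_intros continuous_on_compose2[OF continuous_on_hermite]; simp)
qed

lemma hermite_prod_exp_bound:
  fixes U :: "real^'d^'m"
  assumes orth: "transpose U ** U = mat 1" and "v \<ge> 0" and "R \<ge> 0"
  obtains K where "\<And>s y. (\<forall>l. \<bar>s$l\<bar> \<le> R) \<Longrightarrow>
    \<bar>hermite_prod v U p s y\<bar> \<le> K * exp ((R+1) * real CARD('d) * (\<Sum>i\<in>UNIV. \<bar>y$i\<bar>))"
proof
  fix s :: "real^'d" and y :: "real^'m"
  assume sR: "\<forall>l. \<bar>s$l\<bar> \<le> R"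
  define Y where "Y = (\<Sum>i\<in>UNIV. \<bar>y$i\<bar>)"
  have "\<bar>hermite_prod v U p s y\<bar> = (\<Prod>l\<in>UNIV. \<bar>hermite_gen v (p l) (s$l) ((transpose U *v y)$l)\<bar>)"
    unfolding hermite_prod_def by (simp add: abs_prod)
  also have "\<dots> \<le> (\<Prod>l\<in>UNIV. (fact (p l) * exp (v * R + sqrt (v * real (p l)))) * exp ((R+1) * Y))"
  proof (rule prod_mono, intro conjI abs_ge_zero order_trans[OF abs_hermite_gen_le_exp])
    fix l
    show "\<bar>s$l\<bar> \<le> R" using sR by blast
    show "fact (p l) * exp (v * R + sqrt (v * real (p l))) * exp ((R + 1) * \<bar>(transpose U *v y)$l\<bar>)
        \<le> fact (p l) * exp (v * R + sqrt (v * real (p l))) * exp ((R+1) * Y)"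
      unfolding Y_def using assms abs_orthonormal_cols_transpose_mult_le[OF orth, of y l]
      by (intro mult_left_mono) (auto intro!: mult_left_mono)
  qed (use assms in auto)
  also have "\<dots> = (\<Prod>l\<in>UNIV. fact (p l) * exp (v * R + sqrt (v * real (p l)))) * exp ((R+1) * real CARD('d) * Y)"
    by (simp add: prod.distrib exp_of_nat_mult[symmetric] prod_constant ac_simps)
  finally show "\<bar>hermite_prod v U p s y\<bar> \<le> (\<Prod>l\<in>UNIV. fact (p l) * exp (v * R + sqrt (v * real (p l))))
      * exp ((R+1) * real CARD('d) * (\<Sum>i\<in>UNIV. \<bar>y$i\<bar>))"
    unfolding Y_def .
qed

lemma integrable_hermite_prod:
  fixes U :: "real^'d^'m"
  assumes orth: "transpose U ** U = mat 1" and "\<sigma> > 0"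
  shows "integrable (gauss_measure \<sigma> m) (hermite_prod (\<sigma>\<^sup>2) U p s)"
proof -
  define R where "R = (\<Sum>l\<in>UNIV. \<bar>s$l\<bar>)"
  have "R \<ge> 0" unfolding R_def by (simp add: sum_nonneg)
  then obtain K where K: "\<And>s y. (\<forall>l. \<bar>s$l\<bar> \<le> R) \<Longrightarrow>
      \<bar>hermite_prod (\<sigma>\<^sup>2) U p s y\<bar> \<le> K * exp ((R+1) * real CARD('d) * (\<Sum>i\<in>UNIV. \<bar>y$i\<bar>))"
    using hermite_prod_exp_bound[OF orth] by (metis zero_le_power2)
  have "\<forall>l. \<bar>s$l\<bar> \<le> R" unfolding R_def by (auto intro: member_le_sum)
  then show ?thesis
    by (rule integrable_gauss_measure_exp_bounded[OF assms(2) borel_measurable_hermite_prod K])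
qed

lemma hermite_prod_0:
  fixes U :: "real^'d^'m"
  shows "hermite_prod v U (\<lambda>_. 0) s y = exp (- v * (s \<bullet> s) / 2) * (\<Prod>i\<in>UNIV. exp ((U *v s)$i * y$i))"
proof -
  have "hermite_prod v U (\<lambda>_. 0) s y = exp (\<Sum>l\<in>UNIV. s$l * (transpose U *v y)$l - v * (s$l)\<^sup>2/2)"
    unfolding hermite_prod_def hermite_gen_def by (simp add: exp_sum)
  also have "(\<Sum>l\<in>UNIV. s$l * (transpose U *v y)$l - v * (s$l)\<^sup>2/2) = s \<bullet> (transpose U *v y) - v * (s \<bullet> s) / 2"
    by (simp add: inner_vec_def sum_subtractf sum_distrib_left sum_divide_distrib power2_eq_square)
  also have "s \<bullet> (transpose U *v y) = (U *v s) \<bullet> y"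
    by (rule inner_matrix_vector_transpose[symmetric])
  also have "\<dots> = (\<Sum>i\<in>UNIV. (U *v s)$i * y$i)"
    by (simp add: inner_vec_def)
  finally show ?thesis by (simp add: exp_sum[symmetric] exp_add[symmetric] algebra_simps)
qed

lemma integral_hermite_prod_0:
  fixes U :: "real^'d^'m"
  assumes orth: "transpose U ** U = mat 1" and sig: "\<sigma> > 0"
  shows "(\<integral>y. hermite_prod (\<sigma>\<^sup>2) U (\<lambda>_. 0) s y \<partial>gauss_measure \<sigma> m) = exp (s \<bullet> (transpose U *v m))"
proof -
  define b where "b = U *v s"
  have "(\<integral>y. hermite_prod (\<sigma>\<^sup>2) U (\<lambda>_. 0) s y \<partial>gauss_measure \<sigma> m)
      = exp (- \<sigma>\<^sup>2 * (s \<bullet> s) / 2) * (\<integral>y. (\<Prod>i\<in>UNIV. exp (b$i * y$i)) \<partial>gauss_measure \<sigma> m)"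
    unfolding hermite_prod_0 b_def by simp
  also have "(\<integral>y. (\<Prod>i\<in>UNIV. exp (b$i * y$i)) \<partial>gauss_measure \<sigma> m) = (\<Prod>i\<in>UNIV. exp (b$i * m$i + \<sigma>\<^sup>2 * (b$i)\<^sup>2/2))"
    using integral_gauss_measure_prod[OF sig, of "\<lambda>i t. exp (b$i * t)" m]
      integrable_normal_density_mult_exp[OF sig] integral_normal_density_mult_exp[OF sig] by simp
  also have "\<dots> = exp (b \<bullet> m + \<sigma>\<^sup>2 * (b \<bullet> b) / 2)"
    by (simp add: exp_sum[symmetric] inner_vec_def sum.distrib sum_distrib_left sum_divide_distrib power2_eq_square)
  also have "b \<bullet> b = s \<bullet> s" unfolding b_def by (rule inner_orthonormal_cols_self[OF orth])
  also have "b \<bullet> m = s \<bullet> (transpose U *v m)" unfolding b_def by (rule inner_matrix_vector_transpose)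
  finally show ?thesis by (simp add: exp_add[symmetric] algebra_simps)
qed

lemma DERIV_hermite_prod_axis:
  "((\<lambda>t. hermite_prod v U p (s + t *\<^sub>R axis l 1) y) has_real_derivative
     hermite_prod v U (p(l := Suc (p l))) (s + t *\<^sub>R axis l 1) y) (at t)"
proof -
  define P where "P = (\<Prod>l'\<in>UNIV-{l}. hermite_gen v (p l') (s$l') ((transpose U *v y)$l'))"
  have split: "hermite_prod v U q (s + t *\<^sub>R axis l 1) y = hermite_gen v (q l) (s$l + t) ((transpose U *v y)$l) * P"
    if "\<forall>l'\<in>UNIV-{l}. q l' = p l'" for q t
    unfolding hermite_prod_def P_def using that
    by (subst prod.remove[of UNIV l]) (auto simp: axis_def intro!: prod.cong)
  have "((\<lambda>t. hermite_gen v (p l) (s$l + t) ((transpose U *v y)$l) * P) has_real_derivative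
      hermite_gen v (Suc (p l)) (s$l + t) ((transpose U *v y)$l) * 1 * P) (at t)"
    by (intro DERIV_cmult_right DERIV_chain2[OF DERIV_hermite_gen]) (auto intro!: derivative_eq_intros)
  then show ?thesis
    by (simp add: split)
qed

lemma integral_hermite_prod_fun_upd_Suc:
  fixes U :: "real^'d^'m"
  assumes orth: "transpose U ** U = mat 1" and sig: "\<sigma> > 0"
    and IH: "\<And>s. (\<integral>y. hermite_prod (\<sigma>\<^sup>2) U p s y \<partial>gauss_measure \<sigma> m)
      = mi_pow (transpose U *v m) p * exp (s \<bullet> (transpose U *v m))"
  shows "(\<integral>y. hermite_prod (\<sigma>\<^sup>2) U (p(l := Suc (p l))) s y \<partial>gauss_measure \<sigma> m)
      = mi_pow (transpose U *v m) (p(l := Suc (p l))) * exp (s \<bullet> (transpose U *v m))"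
proof -
  define q where "q = p(l := Suc (p l))"
  define \<mu> where "\<mu> = transpose U *v m"
  define e where "e = (axis l 1 :: real^'d)"
  define R where "R = (\<Sum>l\<in>UNIV. \<bar>s$l\<bar>) + 1"
  have "R \<ge> 0" unfolding R_def by (simp add: sum_nonneg add_nonneg_nonneg)
  then obtain K where K: "\<And>s y. (\<forall>l. \<bar>s$l\<bar> \<le> R) \<Longrightarrow>
      \<bar>hermite_prod (\<sigma>\<^sup>2) U q s y\<bar> \<le> K * exp ((R+1) * real CARD('d) * (\<Sum>i\<in>UNIV. \<bar>y$i\<bar>))"
    using hermite_prod_exp_bound[OF orth] by (metis zero_le_power2)
  have bound: "\<bar>hermite_prod (\<sigma>\<^sup>2) U q (s + t *\<^sub>R e) y\<bar> \<le> K * exp ((R+1) * real CARD('d) * (\<Sum>i\<in>UNIV. \<bar>y$i\<bar>))"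
    if "\<bar>t - 0\<bar> \<le> 1" for t y
  proof (rule K, intro allI)
    fix l'
    have "\<bar>s$l'\<bar> \<le> (\<Sum>l\<in>UNIV. \<bar>s$l\<bar>)" by (rule member_le_sum) auto
    then show "\<bar>(s + t *\<^sub>R e)$l'\<bar> \<le> R" unfolding e_def R_def using that by (auto simp: axis_def)
  qed
  have "integrable (gauss_measure \<sigma> m) (\<lambda>y. K * exp ((R+1) * real CARD('d) * (\<Sum>i\<in>UNIV. \<bar>y$i\<bar>)))"
    using integrable_gauss_measure_exp_sum_abs[OF sig, of m "(R+1) * real CARD('d)"] by simp
  moreover have "hermite_prod (\<sigma>\<^sup>2) U q (s + 0 *\<^sub>R e) \<in> borel_measurable (gauss_measure \<sigma> m)"
    using borel_measurable_hermite_prod unfolding gauss_measure_def by simp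
  ultimately have "((\<lambda>t. \<integral>y. hermite_prod (\<sigma>\<^sup>2) U p (s + t *\<^sub>R e) y \<partial>gauss_measure \<sigma> m) has_real_derivative
      (\<integral>y. hermite_prod (\<sigma>\<^sup>2) U q (s + 0 *\<^sub>R e) y \<partial>gauss_measure \<sigma> m)) (at 0)"
    unfolding q_def e_def
    by (intro DERIV_integral_dominated[OF integrable_hermite_prod[OF orth sig] _ DERIV_hermite_prod_axis _
          bound[unfolded q_def e_def]])
  moreover have "(\<lambda>t. \<integral>y. hermite_prod (\<sigma>\<^sup>2) U p (s + t *\<^sub>R e) y \<partial>gauss_measure \<sigma> m)
      = (\<lambda>t. mi_pow \<mu> p * exp (s \<bullet> \<mu> + t * \<mu>$l))"
    unfolding IH \<mu>_def e_def by (simp add: inner_add_left inner_commute[of "axis l 1"] inner_axis)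
  moreover have "((\<lambda>t. mi_pow \<mu> p * exp (s \<bullet> \<mu> + t * \<mu>$l)) has_real_derivative
      mi_pow \<mu> p * (exp (s \<bullet> \<mu>) * \<mu>$l)) (at 0)"
    by (auto intro!: derivative_eq_intros)
  ultimately have "(\<integral>y. hermite_prod (\<sigma>\<^sup>2) U q s y \<partial>gauss_measure \<sigma> m) = mi_pow \<mu> p * (exp (s \<bullet> \<mu>) * \<mu>$l)"
    using DERIV_unique by fastforce
  then show ?thesis
    unfolding q_def[symmetric] \<mu>_def[symmetric] mi_pow_fun_upd_Suc[of \<mu> p l, folded q_def] by simp
qed

lemma integral_hermite_prod:
  fixes U :: "real^'d^'m"
  assumes orth: "transpose U ** U = mat 1" and sig: "\<sigma> > 0"
  shows "(\<integral>y. hermite_prod (\<sigma>\<^sup>2) U p s y \<partial>gauss_measure \<sigma> m)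
    = mi_pow (transpose U *v m) p * exp (s \<bullet> (transpose U *v m))"
proof (induction "mi_abs p" arbitrary: p s)
  case 0
  then have "p = (\<lambda>_. 0)" by (simp add: mi_abs_def fun_eq_iff)
  then show ?case
    using integral_hermite_prod_0[OF orth sig] by (simp add: mi_pow_def)
next
  case (Suc n)
  then obtain q l where "p = q(l := Suc (q l))" and "mi_abs q = n"
    by (metis mi_abs_eq_SucE)
  then show ?case
    using integral_hermite_prod_fun_upd_Suc[OF orth sig] Suc.hyps(1) by blast
qed

lemma hermite_prod_series_bound:
  fixes U :: "real^'d::finite^'m::finite" and s :: "real^'d"
  assumes orth: "transpose U ** U = mat 1" and "v \<ge> 0" and C_nonneg: "C \<ge> 0"
  defines "h y l n \<equiv> C ^ n / fact n * \<bar>hermite_gen v n (s$l) ((transpose U *v y)$l)\<bar>"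
  obtains K where "\<And>y. (\<lambda>p. \<Prod>l\<in>UNIV. h y l (p l)) summable_on UNIV"
    and "\<And>y. (\<Sum>\<^sub>\<infinity>p. \<Prod>l\<in>UNIV. h y l (p l)) \<le> K * exp ((\<Sum>l\<in>UNIV. \<bar>s$l\<bar> + 2 * C) * (\<Sum>i\<in>UNIV. \<bar>y$i\<bar>))"
proof -
  define g where "g l z n = C ^ n / fact n * \<bar>hermite_gen v n (s$l) z\<bar>" for l z n
  have "\<forall>l. \<exists>K\<ge>0. \<forall>z. summable (g l z) \<and> suminf (g l z) \<le> K * exp ((\<bar>s$l\<bar> + 2*C) * \<bar>z\<bar>)"
    unfolding g_def using assms by (intro allI hermite_gen_series_bound)
  then obtain K where K: "\<forall>l. K l \<ge> 0 \<and>
      (\<forall>z. summable (g l z) \<and> suminf (g l z) \<le> K l * exp ((\<bar>s$l\<bar> + 2*C) * \<bar>z\<bar>))"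
    by (rule choice[THEN exE])
  have h_eq: "h y l = g l ((transpose U *v y)$l)" for y l
    unfolding h_def g_def ..
  have h0: "h y l n \<ge> 0" for y l n unfolding h_def using C_nonneg by simp
  have hs: "summable (h y l)" for y l unfolding h_eq using K by blast
  show thesis
  proof
    show "(\<lambda>p. \<Prod>l\<in>UNIV. h y l (p l)) summable_on UNIV" for y
      by (rule summable_on_prod_multiindex[OF h0 hs])
    fix y :: "real^'m"
    have "(\<Sum>\<^sub>\<infinity>p. \<Prod>l\<in>UNIV. h y l (p l)) = (\<Prod>l\<in>UNIV. suminf (h y l))"
      by (rule infsum_prod_multiindex[OF h0 hs])
    also have "\<dots> \<le> (\<Prod>l\<in>UNIV. K l * exp ((\<bar>s$l\<bar> + 2 * C) * (\<Sum>i\<in>UNIV. \<bar>y$i\<bar>)))"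
    proof (rule prod_mono, intro conjI)
      fix l
      show "0 \<le> suminf (h y l)" by (rule suminf_nonneg[OF hs h0])
      have "exp ((\<bar>s$l\<bar> + 2 * C) * \<bar>(transpose U *v y)$l\<bar>) \<le> exp ((\<bar>s$l\<bar> + 2 * C) * (\<Sum>i\<in>UNIV. \<bar>y$i\<bar>))"
        using abs_orthonormal_cols_transpose_mult_le[OF orth, of y l] C_nonneg by (simp add: mult_left_mono)
      then have "K l * exp ((\<bar>s$l\<bar> + 2 * C) * \<bar>(transpose U *v y)$l\<bar>)
          \<le> K l * exp ((\<bar>s$l\<bar> + 2 * C) * (\<Sum>i\<in>UNIV. \<bar>y$i\<bar>))"
        using K by (intro mult_left_mono) auto
      moreover have "suminf (h y l) \<le> K l * exp ((\<bar>s$l\<bar> + 2 * C) * \<bar>(transpose U *v y)$l\<bar>)"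
        unfolding h_eq using K by blast
      ultimately show "suminf (h y l) \<le> K l * exp ((\<bar>s$l\<bar> + 2 * C) * (\<Sum>i\<in>UNIV. \<bar>y$i\<bar>))"
        by linarith
    qed
    also have "\<dots> = (\<Prod>l\<in>UNIV. K l) * exp ((\<Sum>l\<in>UNIV. \<bar>s$l\<bar> + 2 * C) * (\<Sum>i\<in>UNIV. \<bar>y$i\<bar>))"
      by (simp add: prod.distrib exp_sum[symmetric] sum_distrib_right)
    finally show "(\<Sum>\<^sub>\<infinity>p. \<Prod>l\<in>UNIV. h y l (p l))
        \<le> (\<Prod>l\<in>UNIV. K l) * exp ((\<Sum>l\<in>UNIV. \<bar>s$l\<bar> + 2 * C) * (\<Sum>i\<in>UNIV. \<bar>y$i\<bar>))" .
  qed
qed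

definition hermite_series_term ::
    "real \<Rightarrow> real^'d^'m \<Rightarrow> real^'d \<Rightarrow> (('d::finite \<Rightarrow> nat) \<Rightarrow> real) \<Rightarrow> ('d \<Rightarrow> nat) \<Rightarrow> real^'m \<Rightarrow> real" where
  "hermite_series_term \<sigma> U s a p y = a p / mi_fact p / \<sigma> ^ mi_abs p * hermite_prod (\<sigma>\<^sup>2) U p s y"

definition hermite_estimator ::
    "real \<Rightarrow> real^'d^'m \<Rightarrow> real^'d \<Rightarrow> (('d::finite \<Rightarrow> nat) \<Rightarrow> real) \<Rightarrow> real^'m \<Rightarrow> real" where
  "hermite_estimator \<sigma> U s a y = (\<Sum>\<^sub>\<infinity>p. hermite_series_term \<sigma> U s a p y)"

lemma borel_measurable_hermite_series_term: "hermite_series_term \<sigma> U s a p \<in> borel_measurable borel"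
  unfolding hermite_series_term_def by (intro borel_measurable_times borel_measurable_const borel_measurable_hermite_prod)

context
  fixes \<sigma> C :: real and U :: "real^'d::finite^'m::finite" and a :: "('d \<Rightarrow> nat) \<Rightarrow> real"
    and s :: "real^'d"
  assumes orth: "transpose U ** U = mat 1" and sigma_pos: "\<sigma> > 0" and C_nonneg: "C \<ge> 0"
    and a_bound: "\<And>p. \<bar>a p\<bar> \<le> C ^ mi_abs p"
begin

lemma summable_on_coeff_mi_pow: "(\<lambda>p. a p / mi_fact p / \<sigma> ^ mi_abs p * mi_pow z p) summable_on UNIV"
proof -
  have C': "C / \<sigma> \<ge> 0" using C_nonneg sigma_pos by simp
  have "(\<lambda>p. \<Prod>l\<in>UNIV. (C / \<sigma> * \<bar>z$l\<bar>) ^ p l / fact (p l)) summable_on UNIV"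
    using C' summable_exp by (intro summable_on_prod_multiindex) (auto simp: divide_inverse_commute)
  then have "(\<lambda>p. \<bar>a p / mi_fact p / \<sigma> ^ mi_abs p * mi_pow z p\<bar>) summable_on UNIV"
  proof (rule summable_on_comparison_test)
    fix p
    have pow: "\<bar>mi_pow z p\<bar> = (\<Prod>l\<in>UNIV. \<bar>z$l\<bar> ^ p l)"
      unfolding mi_pow_def by (simp add: abs_prod power_abs)
    have "\<bar>a p / mi_fact p / \<sigma> ^ mi_abs p * mi_pow z p\<bar>
        \<le> (\<Prod>l\<in>UNIV. (C/\<sigma>) ^ p l / fact (p l)) * (\<Prod>l\<in>UNIV. \<bar>z$l\<bar> ^ p l)"
      unfolding abs_mult pow
      by (intro mult_right_mono abs_coeff_le_prod[OF sigma_pos a_bound]) (simp_all add: prod_nonneg)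
    also have "\<dots> = (\<Prod>l\<in>UNIV. (C/\<sigma>) ^ p l / fact (p l) * \<bar>z$l\<bar> ^ p l)"
      by (rule prod.distrib[symmetric])
    also have "\<dots> = (\<Prod>l\<in>UNIV. (C / \<sigma> * \<bar>z$l\<bar>) ^ p l / fact (p l))"
      by (intro prod.cong) (simp_all add: power_mult_distrib power_divide)
    finally show "\<bar>a p / mi_fact p / \<sigma> ^ mi_abs p * mi_pow z p\<bar>
        \<le> (\<Prod>l\<in>UNIV. (C / \<sigma> * \<bar>z$l\<bar>) ^ p l / fact (p l))" .
  qed simp
  then show ?thesis by (simp add: abs_summable_summable)
qed

lemma hermite_series_dominated:
  obtains K B where "B \<ge> 0"
    and "\<And>y. (\<lambda>p. \<bar>hermite_series_term \<sigma> U s a p y\<bar>) summable_on UNIV"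
    and "\<And>y. (\<Sum>\<^sub>\<infinity>p. \<bar>hermite_series_term \<sigma> U s a p y\<bar>) \<le> K * exp (B * (\<Sum>i\<in>UNIV. \<bar>y$i\<bar>))"
proof -
  define C' where "C' = C / \<sigma>"
  have C'0: "C' \<ge> 0" unfolding C'_def using C_nonneg sigma_pos by simp
  define h where "h y l n = C' ^ n / fact n * \<bar>hermite_gen (\<sigma>\<^sup>2) n (s$l) ((transpose U *v y)$l)\<bar>" for y l n
  obtain K where sum_h: "\<And>y. (\<lambda>p. \<Prod>l\<in>UNIV. h y l (p l)) summable_on UNIV"
    and sum_h_le: "\<And>y. (\<Sum>\<^sub>\<infinity>p. \<Prod>l\<in>UNIV. h y l (p l))
      \<le> K * exp ((\<Sum>l\<in>UNIV. \<bar>s$l\<bar> + 2 * C') * (\<Sum>i\<in>UNIV. \<bar>y$i\<bar>))"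
    unfolding h_def by (rule hermite_prod_series_bound[where v="\<sigma>\<^sup>2" and s=s, OF orth zero_le_power2 C'0]) blast
  have term_le: "\<bar>hermite_series_term \<sigma> U s a p y\<bar> \<le> (\<Prod>l\<in>UNIV. h y l (p l))" for p y
  proof -
    have "\<bar>hermite_series_term \<sigma> U s a p y\<bar> = \<bar>a p / mi_fact p / \<sigma> ^ mi_abs p\<bar>
        * (\<Prod>l\<in>UNIV. \<bar>hermite_gen (\<sigma>\<^sup>2) (p l) (s$l) ((transpose U *v y)$l)\<bar>)"
      unfolding hermite_series_term_def hermite_prod_def by (simp add: abs_mult abs_prod)
    also have "\<dots> \<le> (\<Prod>l\<in>UNIV. C' ^ p l / fact (p l))
        * (\<Prod>l\<in>UNIV. \<bar>hermite_gen (\<sigma>\<^sup>2) (p l) (s$l) ((transpose U *v y)$l)\<bar>)"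
      unfolding C'_def by (intro mult_right_mono abs_coeff_le_prod[OF sigma_pos a_bound]) (simp add: prod_nonneg)
    also have "\<dots> = (\<Prod>l\<in>UNIV. h y l (p l))" unfolding h_def by (rule prod.distrib[symmetric])
    finally show ?thesis .
  qed
  show thesis
  proof
    show "(\<Sum>l\<in>UNIV. \<bar>s$l\<bar> + 2 * C') \<ge> 0" using C'0 by (simp add: sum_nonneg)
    show summable_abs: "(\<lambda>p. \<bar>hermite_series_term \<sigma> U s a p y\<bar>) summable_on UNIV" for y
      by (rule summable_on_comparison_test[OF sum_h term_le]) simp
    show "(\<Sum>\<^sub>\<infinity>p. \<bar>hermite_series_term \<sigma> U s a p y\<bar>)
        \<le> K * exp ((\<Sum>l\<in>UNIV. \<bar>s$l\<bar> + 2 * C') * (\<Sum>i\<in>UNIV. \<bar>y$i\<bar>))" for y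
      using infsum_mono[OF summable_abs sum_h term_le] sum_h_le[of y] by (rule order_trans)
  qed
qed

lemma
  fixes y :: "real^'m"
  defines "en \<equiv> from_nat_into (UNIV :: ('d \<Rightarrow> nat) set)"
  shows hermite_estimator_partial_sums:
      "(\<lambda>N. \<Sum>n<N. hermite_series_term \<sigma> U s a (en n) y) \<longlonglongrightarrow> hermite_estimator \<sigma> U s a y"
    and abs_hermite_series_partial_sum_le:
      "\<bar>\<Sum>n<N. hermite_series_term \<sigma> U s a (en n) y\<bar> \<le> (\<Sum>\<^sub>\<infinity>p. \<bar>hermite_series_term \<sigma> U s a p y\<bar>)"
proof -
  obtain K B :: real where summable_abs: "(\<lambda>p. \<bar>hermite_series_term \<sigma> U s a p y\<bar>) summable_on UNIV"
    using hermite_series_dominated by metis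
  then have "(\<lambda>p. hermite_series_term \<sigma> U s a p y) summable_on UNIV"
    by (simp add: abs_summable_summable)
  then show "(\<lambda>N. \<Sum>n<N. hermite_series_term \<sigma> U s a (en n) y) \<longlonglongrightarrow> hermite_estimator \<sigma> U s a y"
    using sums_infsum_from_nat_into[OF infinite_UNIV_multiindex]
    unfolding en_def hermite_estimator_def sums_def by blast
  have inj: "inj_on en {..<N}"
    using bij_betw_from_nat_into[OF countableI_type infinite_UNIV_multiindex]
    unfolding en_def bij_betw_def by (auto intro: inj_on_subset)
  have "\<bar>\<Sum>n<N. hermite_series_term \<sigma> U s a (en n) y\<bar> \<le> (\<Sum>n<N. \<bar>hermite_series_term \<sigma> U s a (en n) y\<bar>)"
    by (rule sum_abs)
  also have "\<dots> = (\<Sum>p\<in>en ` {..<N}. \<bar>hermite_series_term \<sigma> U s a p y\<bar>)"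
    by (simp add: sum.reindex[OF inj])
  also have "\<dots> \<le> (\<Sum>\<^sub>\<infinity>p. \<bar>hermite_series_term \<sigma> U s a p y\<bar>)"
    by (rule finite_sum_le_infsum[OF summable_abs]) auto
  finally show "\<bar>\<Sum>n<N. hermite_series_term \<sigma> U s a (en n) y\<bar> \<le> (\<Sum>\<^sub>\<infinity>p. \<bar>hermite_series_term \<sigma> U s a p y\<bar>)" .
qed

lemma borel_measurable_hermite_estimator: "hermite_estimator \<sigma> U s a \<in> borel_measurable borel"
  by (rule borel_measurable_LIMSEQ_real[OF hermite_estimator_partial_sums])
    (intro borel_measurable_sum borel_measurable_hermite_series_term)

lemma hermite_estimator_exp_bound:
  obtains K B where "B \<ge> 0" and "\<And>y. \<bar>hermite_estimator \<sigma> U s a y\<bar> \<le> K * exp (B * (\<Sum>i\<in>UNIV. \<bar>y$i\<bar>))"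
proof -
  obtain K B where "B \<ge> 0"
    and summable_abs: "\<And>y. (\<lambda>p. \<bar>hermite_series_term \<sigma> U s a p y\<bar>) summable_on UNIV"
    and le: "\<And>y. (\<Sum>\<^sub>\<infinity>p. \<bar>hermite_series_term \<sigma> U s a p y\<bar>) \<le> K * exp (B * (\<Sum>i\<in>UNIV. \<bar>y$i\<bar>))"
    by (rule hermite_series_dominated) blast
  moreover have "\<bar>hermite_estimator \<sigma> U s a y\<bar> \<le> K * exp (B * (\<Sum>i\<in>UNIV. \<bar>y$i\<bar>))" for y
  proof -
    have "\<bar>hermite_estimator \<sigma> U s a y\<bar> \<le> (\<Sum>\<^sub>\<infinity>p. \<bar>hermite_series_term \<sigma> U s a p y\<bar>)"
      using norm_infsum_bound[of "\<lambda>p. hermite_series_term \<sigma> U s a p y" UNIV] summable_abs[of y]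
      unfolding hermite_estimator_def by simp
    then show ?thesis using le[of y] by linarith
  qed
  ultimately show thesis using that by blast
qed

lemma integrable_hermite_estimator: "integrable (gauss_measure \<sigma> m) (hermite_estimator \<sigma> U s a)"
  by (rule hermite_estimator_exp_bound,
      rule integrable_gauss_measure_exp_bounded[OF sigma_pos borel_measurable_hermite_estimator])

lemma integrable_hermite_estimator_power2_diff:
  "integrable (gauss_measure \<sigma> m) (\<lambda>y. (hermite_estimator \<sigma> U s a y - r)\<^sup>2)"
  by (rule hermite_estimator_exp_bound,
      rule integrable_gauss_measure_power2_diff[OF sigma_pos borel_measurable_hermite_estimator])

lemma tendsto_integral_hermite_series_partial_sums:
  defines "en \<equiv> from_nat_into (UNIV :: ('d \<Rightarrow> nat) set)"
  shows "(\<lambda>N. \<integral>y. (\<Sum>n<N. hermite_series_term \<sigma> U s a (en n) y) \<partial>gauss_measure \<sigma> m)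
    \<longlonglongrightarrow> (\<integral>y. hermite_estimator \<sigma> U s a y \<partial>gauss_measure \<sigma> m)"
proof -
  obtain K B :: real where le: "\<And>y. (\<Sum>\<^sub>\<infinity>p. \<bar>hermite_series_term \<sigma> U s a p y\<bar>) \<le> K * exp (B * (\<Sum>i\<in>UNIV. \<bar>y$i\<bar>))"
    using hermite_series_dominated by metis
  show ?thesis
  proof (rule integral_dominated_convergence[where w="\<lambda>y. K * exp (B * (\<Sum>i\<in>UNIV. \<bar>y$i\<bar>))"])
    show "hermite_estimator \<sigma> U s a \<in> borel_measurable (gauss_measure \<sigma> m)"
      using borel_measurable_hermite_estimator unfolding gauss_measure_def by simp
    have "(\<lambda>y. \<Sum>n<N. hermite_series_term \<sigma> U s a (en n) y) \<in> borel_measurable borel" for N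
      by (intro borel_measurable_sum borel_measurable_hermite_series_term)
    then show "(\<lambda>y. \<Sum>n<N. hermite_series_term \<sigma> U s a (en n) y) \<in> borel_measurable (gauss_measure \<sigma> m)" for N
      unfolding gauss_measure_def by simp
    show "integrable (gauss_measure \<sigma> m) (\<lambda>y. K * exp (B * (\<Sum>i\<in>UNIV. \<bar>y$i\<bar>)))"
      using integrable_gauss_measure_exp_sum_abs[OF sigma_pos, of m B] by simp
    show "AE y in gauss_measure \<sigma> m. (\<lambda>N. \<Sum>n<N. hermite_series_term \<sigma> U s a (en n) y)
        \<longlonglongrightarrow> hermite_estimator \<sigma> U s a y"
      unfolding en_def using hermite_estimator_partial_sums by simp
    show "AE y in gauss_measure \<sigma> m. norm (\<Sum>n<N. hermite_series_term \<sigma> U s a (en n) y)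
        \<le> K * exp (B * (\<Sum>i\<in>UNIV. \<bar>y$i\<bar>))" for N
    proof (rule AE_I2)
      fix y :: "real^'m"
      show "norm (\<Sum>n<N. hermite_series_term \<sigma> U s a (en n) y) \<le> K * exp (B * (\<Sum>i\<in>UNIV. \<bar>y$i\<bar>))"
        using abs_hermite_series_partial_sum_le[of y N, folded en_def] le[of y] by simp
    qed
  qed
qed

lemma integral_hermite_estimator:
  "(\<integral>y. hermite_estimator \<sigma> U s a y \<partial>gauss_measure \<sigma> m) = exp (s \<bullet> (transpose U *v m)) *
     (\<Sum>\<^sub>\<infinity>p. a p / mi_fact p * mi_pow ((1/\<sigma>) *\<^sub>R (transpose U *v m)) p)"
proof -
  define \<mu> where "\<mu> = transpose U *v m"
  define en where "en = from_nat_into (UNIV :: ('d \<Rightarrow> nat) set)"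
  define d where "d p = exp (s \<bullet> \<mu>) * (a p / mi_fact p / \<sigma> ^ mi_abs p * mi_pow \<mu> p)" for p
  have "(\<integral>y. hermite_series_term \<sigma> U s a p y \<partial>gauss_measure \<sigma> m) = d p" for p
    unfolding hermite_series_term_def d_def \<mu>_def
    using integral_hermite_prod[OF orth sigma_pos] by simp
  moreover have "integrable (gauss_measure \<sigma> m) (hermite_series_term \<sigma> U s a p)" for p
    unfolding hermite_series_term_def using integrable_hermite_prod[OF orth sigma_pos] by simp
  ultimately have partial_means:
    "(\<integral>y. (\<Sum>n<N. hermite_series_term \<sigma> U s a (en n) y) \<partial>gauss_measure \<sigma> m) = (\<Sum>n<N. d (en n))" for N
    by (simp add: integral_sum)
  have "(\<lambda>N. \<Sum>n<N. d (en n)) \<longlonglongrightarrow> (\<integral>y. hermite_estimator \<sigma> U s a y \<partial>gauss_measure \<sigma> m)"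
    using tendsto_integral_hermite_series_partial_sums[of m] unfolding en_def[symmetric] partial_means .
  moreover have "(\<lambda>N. \<Sum>n<N. d (en n)) \<longlonglongrightarrow> (\<Sum>\<^sub>\<infinity>p. d p)"
    unfolding d_def en_def sums_def[symmetric]
    by (intro sums_infsum_from_nat_into infinite_UNIV_multiindex summable_on_cmult_right summable_on_coeff_mi_pow)
  ultimately have "(\<integral>y. hermite_estimator \<sigma> U s a y \<partial>gauss_measure \<sigma> m) = (\<Sum>\<^sub>\<infinity>p. d p)"
    by (rule LIMSEQ_unique)
  also have "\<dots> = exp (s \<bullet> \<mu>) * (\<Sum>\<^sub>\<infinity>p. a p / mi_fact p * mi_pow ((1/\<sigma>) *\<^sub>R \<mu>) p)"
  proof -
    have "d = (\<lambda>p. exp (s \<bullet> \<mu>) * (a p / mi_fact p * mi_pow ((1/\<sigma>) *\<^sub>R \<mu>) p))"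
      unfolding d_def mi_pow_scaleR_inverse by auto
    then show ?thesis by (simp only: infsum_cmult_right')
  qed
  finally show ?thesis unfolding \<mu>_def .
qed

end

section \<open>The pseudoinverse of \<open>V \<Sigma>\<inverse>\<close>\<close>

lemma matrix_inv_eqI:
  fixes A B :: "real^'n^'n"
  assumes "A ** B = mat 1" "B ** A = mat 1"
  shows "matrix_inv A = B"
proof -
  define X where "X = matrix_inv A"
  have "A ** X = mat 1 \<and> X ** A = mat 1"
    unfolding X_def matrix_inv_def by (rule someI[of _ B]) (use assms in auto)
  then have XA: "X ** A = mat 1" by simp
  have "X = X ** (A ** B)" using assms by simp
  also have "\<dots> = (X ** A) ** B" by (simp add: matrix_mul_assoc)
  also have "\<dots> = B" using XA by simp
  finally show ?thesis unfolding X_def .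
qed

lemma is_pinv_unique:
  fixes A :: "real^'n^'m"
  assumes X: "is_pinv A X" and Y: "is_pinv A Y"
  shows "X = Y"
proof -
  have X1: "A ** X ** A = A" and X2: "X ** A ** X = X" and X3: "transpose (A ** X) = A ** X"
    and X4: "transpose (X ** A) = X ** A" using X unfolding is_pinv_def by auto
  have Y1: "A ** Y ** A = A" and Y2: "Y ** A ** Y = Y" and Y3: "transpose (A ** Y) = A ** Y"
    and Y4: "transpose (Y ** A) = Y ** A" using Y unfolding is_pinv_def by auto
  have AXY: "A ** X = A ** Y"
  proof -
    have "A ** X = transpose ((A ** Y ** A) ** X)" using X3 Y1 by simp
    also have "\<dots> = transpose (A ** X) ** transpose (A ** Y)"
      by (simp add: matrix_mul_assoc matrix_transpose_mul)
    also have "\<dots> = (A ** X ** A) ** Y" using X3 Y3 by (simp add: matrix_mul_assoc)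
    also have "\<dots> = A ** Y" using X1 by simp
    finally show ?thesis .
  qed
  have XAY: "X ** A = Y ** A"
  proof -
    have "X ** A = transpose (X ** (A ** Y ** A))" using X4 Y1 by simp
    also have "\<dots> = transpose (Y ** A) ** transpose (X ** A)"
      by (simp add: matrix_mul_assoc matrix_transpose_mul)
    also have "\<dots> = Y ** (A ** X ** A)" using X4 Y4 by (simp add: matrix_mul_assoc)
    also have "\<dots> = Y ** A" using X1 by simp
    finally show ?thesis .
  qed
  have "X = (Y ** A) ** X" using X2 XAY by simp
  also have "\<dots> = Y ** (A ** X)" by (simp add: matrix_mul_assoc)
  also have "\<dots> = Y ** (A ** Y)" using AXY by simp
  also have "\<dots> = Y" using Y2 by (simp add: matrix_mul_assoc)
  finally show ?thesis .
qed

lemma pinv_eqI: "is_pinv A X \<Longrightarrow> pinv A = X"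
  unfolding pinv_def by (rule the_equality) (auto intro: is_pinv_unique)

lemma mult_matrix_inv_diagonal:
  fixes \<Sigma> :: "real^'d^'d"
  assumes diag: "\<And>i j. i \<noteq> j \<Longrightarrow> \<Sigma> $ i $ j = 0" and nonzero: "\<And>i. \<Sigma> $ i $ i \<noteq> 0"
  shows "\<Sigma> ** matrix_inv \<Sigma> = mat 1" and "matrix_inv \<Sigma> ** \<Sigma> = mat 1"
proof -
  define D :: "real^'d^'d" where "D = (\<chi> i j. if i = j then 1 / \<Sigma>$i$i else 0)"
  have "(\<Sigma> ** D)$i$j = (\<Sum>k\<in>UNIV. if k = j then \<Sigma>$i$k / \<Sigma>$k$k else 0)" for i j
    unfolding matrix_matrix_mult_def D_def by (simp only: vec_lambda_beta) (intro sum.cong; simp)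
  then have right: "\<Sigma> ** D = mat 1"
    using diag nonzero by (auto simp: vec_eq_iff mat_def)
  have "(D ** \<Sigma>)$i$j = (\<Sum>k\<in>UNIV. if i = k then \<Sigma>$k$j / \<Sigma>$i$i else 0)" for i j
    unfolding matrix_matrix_mult_def D_def by (simp only: vec_lambda_beta) (intro sum.cong; simp)
  then have left: "D ** \<Sigma> = mat 1"
    using diag nonzero by (auto simp: vec_eq_iff mat_def)
  from right left have "matrix_inv \<Sigma> = D" by (rule matrix_inv_eqI)
  with right left show "\<Sigma> ** matrix_inv \<Sigma> = mat 1" and "matrix_inv \<Sigma> ** \<Sigma> = mat 1" by simp_all
qed

lemma pinv_orthonormal_cols_mult_inverse:
  fixes V :: "real^'d^'n" and \<Sigma> :: "real^'d^'d"
  assumes V_orth: "transpose V ** V = mat 1"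
    and inv: "\<Sigma> ** \<Sigma>' = mat 1" "\<Sigma>' ** \<Sigma> = mat 1"
  shows "pinv (V ** \<Sigma>') = \<Sigma> ** transpose V"
proof (rule pinv_eqI)
  have XA: "(\<Sigma> ** transpose V) ** (V ** \<Sigma>') = mat 1"
    using V_orth inv by (simp add: matrix_mul_assoc[symmetric]) (simp add: matrix_mul_assoc)
  have AX: "(V ** \<Sigma>') ** (\<Sigma> ** transpose V) = V ** transpose V"
    using inv by (simp add: matrix_mul_assoc[symmetric]) (simp add: matrix_mul_assoc)
  show "is_pinv (V ** \<Sigma>') (\<Sigma> ** transpose V)"
    unfolding is_pinv_def
  proof (intro conjI)
    have "(V ** \<Sigma>') ** (\<Sigma> ** transpose V) ** (V ** \<Sigma>') = (V ** \<Sigma>') ** ((\<Sigma> ** transpose V) ** (V ** \<Sigma>'))"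
      by (simp add: matrix_mul_assoc)
    then show "(V ** \<Sigma>') ** (\<Sigma> ** transpose V) ** (V ** \<Sigma>') = V ** \<Sigma>'"
      using XA by simp
    show "(\<Sigma> ** transpose V) ** (V ** \<Sigma>') ** (\<Sigma> ** transpose V) = \<Sigma> ** transpose V"
      using XA by simp
    show "transpose ((V ** \<Sigma>') ** (\<Sigma> ** transpose V)) = (V ** \<Sigma>') ** (\<Sigma> ** transpose V)"
      unfolding AX by (simp add: matrix_transpose_mul)
    show "transpose ((\<Sigma> ** transpose V) ** (V ** \<Sigma>')) = (\<Sigma> ** transpose V) ** (V ** \<Sigma>')"
      unfolding XA by simp
  qed
qed

lemma cbias_identity_eq_0:
  fixes x :: "real^'n::finite" and k :: 'n
  assumes "\<sigma> > 0"
  shows "cbias (pinv ((mat 1 :: real^'n^'n) ** matrix_inv (mat 1 :: real^'n^'n))) \<sigma> 0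
    (\<lambda>p. if p = (\<lambda>l. if l = k then 1 else 0) then \<sigma> else 0) k x = 0"
proof -
  define e :: "'n \<Rightarrow> nat" where "e = (\<lambda>l. if l = k then 1 else 0)"
  define f where "f p = (if p = e then \<sigma> else 0) / mi_fact p * mi_pow ((1 / \<sigma>) *\<^sub>R x) p" for p
  have "matrix_inv (mat 1 :: real^'n^'n) = mat 1"
    by (rule matrix_inv_eqI) simp_all
  moreover have "pinv (mat 1 :: real^'n^'n) = mat 1"
    by (rule pinv_eqI) (simp add: is_pinv_def)
  moreover have "(\<Sum>\<^sub>\<infinity>p. f p) = f e"
    by (subst infsum_cong_neutral[where T="{e}"]) (auto simp: f_def)
  moreover have "mi_fact e = 1" unfolding mi_fact_def e_def by (rule prod.neutral) auto
  moreover have "mi_pow ((1 / \<sigma>) *\<^sub>R x) e = x$k / \<sigma>"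
    unfolding mi_pow_def e_def by (simp add: if_distrib prod.delta' cong: if_cong)
  ultimately show ?thesis
    using assms unfolding cbias_def f_def e_def by simp
qed

theorem theorem5:
  fixes H :: "real^'n^'m" and U :: "real^'d^'m" and V :: "real^'d^'n" and Sig :: "real^'d^'d"
    and S :: nat and \<sigma> :: real and k :: 'n
    and x1 :: "real^'d" and C :: real and a :: "('d \<Rightarrow> nat) \<Rightarrow> real"
  assumes S_range: "1 \<le> S" "S \<le> CARD('n)"
    and spark: "spark H > enat S"
    and sigma_pos: "\<sigma> > 0"
    and rank: "rank H = CARD('d)"
    and U_orth: "transpose U ** U = mat 1"
    and V_orth: "transpose V ** V = mat 1"
    and Sig_diag: "\<And>i j. i \<noteq> j \<Longrightarrow> Sig $ i $ j = 0"
    and Sig_pos: "\<And>i. Sig $ i $ i > 0"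
    and svd: "H = U ** Sig ** transpose V"
    and C_nonneg: "C \<ge> 0"
    and a_bound: "\<And>p. \<bar>a p\<bar> \<le> C ^ mi_abs p"
  shows "(\<forall>x0\<in>sparse_set S.
            valid_bias H \<sigma> S k (cbias (pinv (V ** matrix_inv Sig)) \<sigma> x1 a k) x0)
       \<and> (\<forall>x\<in>sparse_set S.
            cbias (pinv ((mat 1 :: real^'n^'n) ** matrix_inv (mat 1 :: real^'n^'n))) \<sigma> 0
              (\<lambda>p. if p = (\<lambda>l. if l = k then 1 else 0) then \<sigma> else 0) k x = 0)"
proof (intro conjI ballI)
  fix x0 :: "real^'n"
  have "\<And>i. Sig $ i $ i \<noteq> 0" using Sig_pos by (metis less_irrefl)
  then have "pinv (V ** matrix_inv Sig) = Sig ** transpose V"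
    by (intro pinv_orthonormal_cols_mult_inverse[OF V_orth] mult_matrix_inv_diagonal[OF Sig_diag])
  then have pinv_mult: "pinv (V ** matrix_inv Sig) *v x = transpose U *v (H *v x)" for x
    by (simp add: svd matrix_vector_mul_assoc matrix_mul_assoc U_orth)
  note estimator_assms = U_orth sigma_pos C_nonneg a_bound
  show "valid_bias H \<sigma> S k (cbias (pinv (V ** matrix_inv Sig)) \<sigma> x1 a k) x0"
    unfolding valid_bias_def finite_variance_def est_bias_def est_mean_def gauss_obs_eq_gauss_measure
  proof (intro exI[of _ "hermite_estimator \<sigma> U x1 a"] conjI ballI)
    show "hermite_estimator \<sigma> U x1 a \<in> borel_measurable borel"
      by (rule borel_measurable_hermite_estimator[OF estimator_assms])
    fix x :: "real^'n"
    show "(\<integral>y. hermite_estimator \<sigma> U x1 a y \<partial>gauss_measure \<sigma> (H *v x)) - x $ k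
        = cbias (pinv (V ** matrix_inv Sig)) \<sigma> x1 a k x"
      unfolding cbias_def pinv_mult integral_hermite_estimator[OF estimator_assms] ..
  qed (simp_all add: integrable_hermite_estimator[OF estimator_assms] integrable_hermite_estimator_power2_diff[OF estimator_assms])
qed (rule cbias_identity_eq_0[OF sigma_pos])

end
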